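(* Let $X$ be a Euclidean polyhedral space, $U\subset X$ open, and $f$ a piecewise affine function on $U$. (1) If $f$ is locally strongly concave, then $f$ is concave. (2) If $X$ has pure dimension and $U$ is balanced and $f$ is concave, then $f$ is weakly concave.
   Context: Polyhedral spaces. Let $X$ be a second countable topological space. A polyhedral structure $\Pi$ on $X$ is a locally finite covering of $X$ by distinct closed subsets $\sigma$ (the polyhedra of $\Pi$), each equipped with a finite-dimensional vector space $M_\sigma$ of continuous real functions on $\sigma$ such that, with $N_\sigma=\operatorname{Hom}(M_\sigma,\mathbb{R})$, the evaluation map $\phi_\sigma\colon\sigma\to N_\sigma$ is a homeomorphism onto a full-dimensional convex polyhedron of an affine hyperplane $H_\sigma\subset N_\sigma$ not containing $0$. Faces of $\sigma$ are the preimages under $\phi_\sigma$ of faces of $\phi_\sigma(\sigma)$ (the empty set is a face). One requires that every face of a polyhedron of $\Pi$ is a polyhedron of $\Pi$ whose function space consists of the restrictions of the functions in $M_\sigma$, and that any two polyhedra intersect in a common face. Via $\phi_\sigma$, each polyhedron inherits an affine structure, a dimension, faces, facets, and a relative interior. $\Pi'$ is a subdivision of $\Pi$ if every polyhedron of $\Pi'$ is contained in a polyhedron of $\Pi$ with affine inclusion; two structures are equivalent if they have a common subdivision. A polyhedral space is $X$ with an equivalence class of polyhedral structures; a polyhedral complex on $X$ is a member of this class. $X$ has pure dimension $n$ if all maximal polyhedra of a polyhedral complex on it have dimension $n$. We write $\tau\prec\sigma$ if $\tau$ is a face of $\sigma$. Euclidean polyhedral spaces. A Euclidean polyhedral space is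 a polyhedral space $X$ with a finite-dimensional real vector space $N_X$ with Euclidean inner product and a map $\iota\colon X\to N_X$ with image in an affine hyperplane $H_X$ not containing $0$, such that some polyhedral complex on $X$ has $\iota$ injective and affine on each polyhedron; only such complexes are called polyhedral complexes on $X$. For a nonempty facet $\tau$ of $\sigma\in\Pi$, $v_{\sigma\setminus\tau}$ is the unit vector orthogonal to the affine span of $\iota(\tau)$, parallel to that of $\iota(\sigma)$, pointing towards $\iota(\sigma)$. Weights, cycles, products. For $U$ open, $\Pi|_U$ is the set of polyhedra of $\Pi$ meeting $U$, $\Pi|_U(k)$ those of dimension $k$. A $k$-dimensional weight on $\Pi|_U$ is a map $c\colon\Pi|_U(k)\to\mathbb{R}$; it is positive if $c\ge0$, and a Minkowski weight if $\sum_{\sigma\in\Pi|_U(k),\sigma\succ\tau}c(\sigma)v_{\sigma\setminus\tau}=0$ for every $\tau\in\Pi|_U(k-1)$. A piecewise affine function on $U$ defined on $\Pi$ is $f\colon U\to\mathbb{R}$ with $f|_{\sigma\cap U}$ affine for every $\sigma\in\Pi|_U$; write $f=f_\sigma\circ\iota$ on $\sigma\cap U$ with $f_\sigma$ linear on $N_X$. $f$ is piecewise affine on $U$ if it is defined on some polyhedral complex. The product is $(f\cdot c)(\tau)=-\sum_{\sigma\in\Pi|_U(k),\sigma\succ\tau}c(\sigma)f_\sigma(v_{\sigma\setminus\tau})$. If $\Pi'$ subdivides $\Pi$, the pullback $c_{\Pi'}$ assigns to $\sigma'\in\Pi'|_U(k)$ the value $c(\sigma)$ if $\sigma'\subset\sigma\in\Pi|_U(k)$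 and $0$ otherwise. The group $Z_k(U)$ of $k$-dimensional Minkowski cycles is the direct limit of the Minkowski weights on $\Pi|_U$ over all polyhedral complexes under pullback; a cycle is positive if represented by a positive Minkowski weight; $f\cdot[c]=[f\cdot c]$. Concavity. A piecewise affine $f$ on $U$ is strongly concave if there is a function $f'\colon H_X\to\mathbb{R}\cup\{\pm\infty\}$ with convex hypograph $\{(y,z): z\le f'(y)\}$ such that $f=f'\circ\iota$ on $U$; locally strongly concave if there is an open cover $U=\bigcup U_i$ with each $f|_{U_i}$ strongly concave. $f$ is concave if for every open $V\subset U$ and every positive Minkowski cycle $\gamma$ on $V$, $f\cdot\gamma$ is positive. When $X$ has pure dimension $n$, a balancing condition on $U$ is an $n$-dimensional Minkowski cycle $\beta_U$ on $U$ represented by a Minkowski weight $b$ on some $\Pi|_U$ with $b(\sigma)>0$ for all $\sigma\in\Pi|_U(n)$; $U$ is then called balanced, and $f$ is weakly concave if $f\cdot\beta_U$ is positive. *)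

theory Defs
  imports "HOL-Analysis.Analysis" "HOL-Library.Extended_Real"
begin

text \<open>The space X is the type 'a (a second countable
topological space), N_X is the Euclidean space 'n, iota is the map X -> N_X and H is the
affine hyperplane H_X.  Since only polyhedral complexes on which iota is injective and affine
are considered, the affine structure (function space M_s) of a cell s is the pull-back
along iota; hence a cell is described just by the subset s of X.\<close>

definition is_face :: "('a \<Rightarrow> 'n::euclidean_space) \<Rightarrow> 'a set \<Rightarrow> 'a set \<Rightarrow> bool" where
  "is_face iota t s \<longleftrightarrow> t \<subseteq> s \<and> (iota ` t) face_of (iota ` s)"

definition cell_dim :: "('a \<Rightarrow> 'n::euclidean_space) \<Rightarrow> 'a set \<Rightarrow> int" where
  "cell_dim iota s = aff_dim (iota ` s)"

definition eucl_complex :: "('a::topological_space \<Rightarrow> 'n::euclidean_space) \<Rightarrow> 'a set set \<Rightarrow> bool" where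
  "eucl_complex iota P \<longleftrightarrow>
     \<Union>P = UNIV \<and>
     (\<forall>x. \<exists>W. open W \<and> x \<in> W \<and> finite {s\<in>P. s \<inter> W \<noteq> {}}) \<and>
     (\<forall>s\<in>P. closed s \<and> inj_on iota s \<and>
        (\<exists>g. homeomorphism s (iota ` s) iota g) \<and> polyhedron (iota ` s)) \<and>
     (\<forall>s\<in>P. \<forall>t. is_face iota t s \<and> t \<noteq> {} \<longrightarrow> t \<in> P) \<and>
     (\<forall>s\<in>P. \<forall>s'\<in>P. is_face iota (s \<inter> s') s \<and> is_face iota (s \<inter> s') s')"

text \<open>Subdivision (the inclusions are automatically affine, both being given by iota).\<close>
definition subdivides :: "'a set set \<Rightarrow> 'a set set \<Rightarrow> bool" where
  "subdivides P' P \<longleftrightarrow> (\<forall>s'\<in>P'. \<exists>s\<in>P. s' \<subseteq> s)"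

text \<open>Polyhedral complexes on X: Euclidean complexes equivalent to the reference complex P0.\<close>
definition complex_on :: "('a::topological_space \<Rightarrow> 'n::euclidean_space) \<Rightarrow> 'a set set \<Rightarrow> 'a set set \<Rightarrow> bool" where
  "complex_on iota P0 P \<longleftrightarrow> eucl_complex iota P \<and>
     (\<exists>P''. eucl_complex iota P'' \<and> subdivides P'' P \<and> subdivides P'' P0)"

definition eucl_poly_space :: "('a::second_countable_topology \<Rightarrow> 'n::euclidean_space) \<Rightarrow> 'n set \<Rightarrow> 'a set set \<Rightarrow> bool" where
  "eucl_poly_space iota H P0 \<longleftrightarrow> eucl_complex iota P0 \<and>
     (\<exists>a b. a \<noteq> 0 \<and> b \<noteq> 0 \<and> H = {y. a \<bullet> y = b}) \<and> range iota \<subseteq> H"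

definition restr :: "('a \<Rightarrow> 'n::euclidean_space) \<Rightarrow> 'a set set \<Rightarrow> 'a set \<Rightarrow> int \<Rightarrow> 'a set set" where
  "restr iota P U k = {s\<in>P. s \<inter> U \<noteq> {} \<and> cell_dim iota s = k}"

definition normal_vec :: "('a \<Rightarrow> 'n::euclidean_space) \<Rightarrow> 'a set \<Rightarrow> 'a set \<Rightarrow> 'n" where
  "normal_vec iota s t = (THE v. norm v = 1 \<and>
      v \<in> span {y - x | y x. y \<in> iota ` s \<and> x \<in> iota ` s} \<and>
      (\<forall>x\<in>iota ` t. \<forall>x'\<in>iota ` t. v \<bullet> (x - x') = 0) \<and>
      (\<exists>y\<in>iota ` s. \<exists>x\<in>iota ` t. v \<bullet> (y - x) > 0))"

definition minkowski :: "('a \<Rightarrow> 'n::euclidean_space) \<Rightarrow> 'a set set \<Rightarrow> 'a set \<Rightarrow> int \<Rightarrow> ('a set \<Rightarrow> real) \<Rightarrow> bool" where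
  "minkowski iota P U k c \<longleftrightarrow>
     (\<forall>t\<in>restr iota P U (k - 1).
        (\<Sum>s\<in>{s\<in>restr iota P U k. is_face iota t s}. c s *\<^sub>R normal_vec iota s t) = 0)"

definition positive_weight :: "('a \<Rightarrow> 'n::euclidean_space) \<Rightarrow> 'a set set \<Rightarrow> 'a set \<Rightarrow> int \<Rightarrow> ('a set \<Rightarrow> real) \<Rightarrow> bool" where
  "positive_weight iota P U k c \<longleftrightarrow> (\<forall>s\<in>restr iota P U k. c s \<ge> 0)"

definition pw_affine_on :: "('a \<Rightarrow> 'n::euclidean_space) \<Rightarrow> 'a set set \<Rightarrow> 'a set \<Rightarrow> ('a \<Rightarrow> real) \<Rightarrow> bool" where
  "pw_affine_on iota P U f \<longleftrightarrow>
     (\<forall>s\<in>P. s \<inter> U \<noteq> {} \<longrightarrow> (\<exists>l::'n \<Rightarrow> real. linear l \<and> (\<forall>x\<in>s \<inter> U. f x = l (iota x))))"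

definition piecewise_affine :: "('a::topological_space \<Rightarrow> 'n::euclidean_space) \<Rightarrow> 'a set set \<Rightarrow> 'a set \<Rightarrow> ('a \<Rightarrow> real) \<Rightarrow> bool" where
  "piecewise_affine iota P0 U f \<longleftrightarrow> (\<exists>P. complex_on iota P0 P \<and> pw_affine_on iota P U f)"

definition lin_part :: "('a \<Rightarrow> 'n::euclidean_space) \<Rightarrow> 'a set \<Rightarrow> ('a \<Rightarrow> real) \<Rightarrow> 'a set \<Rightarrow> 'n \<Rightarrow> real" where
  "lin_part iota U f s = (SOME l. linear l \<and> (\<forall>x\<in>s \<inter> U. f x = l (iota x)))"

definition mult_weight :: "('a \<Rightarrow> 'n::euclidean_space) \<Rightarrow> 'a set set \<Rightarrow> 'a set \<Rightarrow> int \<Rightarrow> ('a \<Rightarrow> real) \<Rightarrow> ('a set \<Rightarrow> real) \<Rightarrow> 'a set \<Rightarrow> real" where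
  "mult_weight iota P U k f c t =
     - (\<Sum>s\<in>{s\<in>restr iota P U k. is_face iota t s}.
          c s * lin_part iota U f s (normal_vec iota s t))"

definition pullback :: "('a \<Rightarrow> 'n::euclidean_space) \<Rightarrow> 'a set set \<Rightarrow> 'a set \<Rightarrow> int \<Rightarrow> ('a set \<Rightarrow> real) \<Rightarrow> 'a set \<Rightarrow> real" where
  "pullback iota P U k c s' =
     (if \<exists>s\<in>restr iota P U k. s' \<subseteq> s
      then c (THE s. s \<in> restr iota P U k \<and> s' \<subseteq> s) else 0)"

text \<open>Equality in the direct limit Z_k(U): (P1,c1) and (P2,c2) represent the same cycle.\<close>
definition same_cycle :: "('a::topological_space \<Rightarrow> 'n::euclidean_space) \<Rightarrow> 'a set set \<Rightarrow> 'a set \<Rightarrow> int \<Rightarrow>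
    'a set set \<Rightarrow> ('a set \<Rightarrow> real) \<Rightarrow> 'a set set \<Rightarrow> ('a set \<Rightarrow> real) \<Rightarrow> bool" where
  "same_cycle iota P0 U k P1 c1 P2 c2 \<longleftrightarrow>
     (\<exists>P3. complex_on iota P0 P3 \<and> subdivides P3 P1 \<and> subdivides P3 P2 \<and>
        (\<forall>s\<in>restr iota P3 U k. pullback iota P1 U k c1 s = pullback iota P2 U k c2 s))"

definition positive_cycle :: "('a::topological_space \<Rightarrow> 'n::euclidean_space) \<Rightarrow> 'a set set \<Rightarrow> 'a set \<Rightarrow> int \<Rightarrow>
    'a set set \<Rightarrow> ('a set \<Rightarrow> real) \<Rightarrow> bool" where
  "positive_cycle iota P0 U k P c \<longleftrightarrow>
     (\<exists>P' c'. complex_on iota P0 P' \<and> minkowski iota P' U k c' \<and> positive_weight iota P' U k c' \<and>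
        same_cycle iota P0 U k P c P' c')"

text \<open>f . gamma is positive, where gamma = [(P,c)] is a k-dimensional Minkowski cycle on V;
  f . gamma = [f . c'] for any representative (P',c') of gamma on which f is defined.\<close>
definition product_positive :: "('a::topological_space \<Rightarrow> 'n::euclidean_space) \<Rightarrow> 'a set set \<Rightarrow> 'a set \<Rightarrow> int \<Rightarrow>
    ('a \<Rightarrow> real) \<Rightarrow> 'a set set \<Rightarrow> ('a set \<Rightarrow> real) \<Rightarrow> bool" where
  "product_positive iota P0 V k f P c \<longleftrightarrow>
     (\<forall>P' c'. complex_on iota P0 P' \<and> pw_affine_on iota P' V f \<and> minkowski iota P' V k c' \<and>
        same_cycle iota P0 V k P c P' c'
        \<longrightarrow> positive_cycle iota P0 V (k - 1) P' (mult_weight iota P' V k f c'))"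

definition concave_pa :: "('a::topological_space \<Rightarrow> 'n::euclidean_space) \<Rightarrow> 'a set set \<Rightarrow> 'a set \<Rightarrow> ('a \<Rightarrow> real) \<Rightarrow> bool" where
  "concave_pa iota P0 U f \<longleftrightarrow>
     (\<forall>V (k::nat) P c. open V \<and> V \<subseteq> U \<and> complex_on iota P0 P \<and> minkowski iota P V (int k) c \<and>
        positive_weight iota P V (int k) c \<longrightarrow> product_positive iota P0 V (int k) f P c)"

definition strongly_concave :: "('a \<Rightarrow> 'n::euclidean_space) \<Rightarrow> 'n set \<Rightarrow> 'a set \<Rightarrow> ('a \<Rightarrow> real) \<Rightarrow> bool" where
  "strongly_concave iota H U f \<longleftrightarrow>
     (\<exists>f'::'n \<Rightarrow> ereal. convex {(y, z::real). y \<in> H \<and> ereal z \<le> f' y} \<and>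
        (\<forall>x\<in>U. ereal (f x) = f' (iota x)))"

definition locally_strongly_concave :: "('a::topological_space \<Rightarrow> 'n::euclidean_space) \<Rightarrow> 'n set \<Rightarrow> 'a set \<Rightarrow> ('a \<Rightarrow> real) \<Rightarrow> bool" where
  "locally_strongly_concave iota H U f \<longleftrightarrow>
     (\<exists>\<U>. (\<forall>W\<in>\<U>. open W \<and> strongly_concave iota H W f) \<and> \<Union>\<U> = U)"

definition pure_dim :: "('a \<Rightarrow> 'n::euclidean_space) \<Rightarrow> 'a set set \<Rightarrow> nat \<Rightarrow> bool" where
  "pure_dim iota P0 n \<longleftrightarrow>
     (\<forall>s\<in>P0. s \<noteq> {} \<and> (\<forall>s'\<in>P0. s \<subseteq> s' \<longrightarrow> s' = s) \<longrightarrow>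
        cell_dim iota s = int n)"

definition balancing :: "('a::topological_space \<Rightarrow> 'n::euclidean_space) \<Rightarrow> 'a set set \<Rightarrow> 'a set \<Rightarrow> nat \<Rightarrow>
    'a set set \<Rightarrow> ('a set \<Rightarrow> real) \<Rightarrow> bool" where
  "balancing iota P0 U n P b \<longleftrightarrow> complex_on iota P0 P \<and> minkowski iota P U (int n) b \<and>
     (\<forall>s\<in>restr iota P U (int n). b s > 0)"

definition weakly_concave :: "('a::topological_space \<Rightarrow> 'n::euclidean_space) \<Rightarrow> 'a set set \<Rightarrow> 'a set \<Rightarrow> nat \<Rightarrow>
    'a set set \<Rightarrow> ('a set \<Rightarrow> real) \<Rightarrow> ('a \<Rightarrow> real) \<Rightarrow> bool" where
  "weakly_concave iota P0 U n P b f \<longleftrightarrow> product_positive iota P0 U (int n) f P b"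

end

theory Submission
  imports Defs
begin

text \<open>For (1), let c be a positive Minkowski weight on a complex on which f is affine; we show that
  f \<cdot> c is again a positive Minkowski weight.

  Balancing: a face \<rho> of codimension two in a polyhedron \<sigma> lies in exactly two facets \<tau>1, \<tau>2
  of \<sigma>, and the two frames formed by the normal of \<tau>i in \<sigma> and the normal of \<rho> in \<tau>i are
  orthonormal bases of the same plane with opposite orientations. Hence the contributions of \<sigma> to
  the balancing sum of f \<cdot> c at \<rho> cancel.

  Positivity: near a relative interior point p of \<tau>, f is the restriction of a concave function.
  The points p + \<epsilon> n\<sigma> obtained by stepping from p into the cells \<sigma> containing \<tau> have
  barycenter p for the weights c \<sigma>, because c is balanced at \<tau>; Jensen's inequality then gives
  \<Sum> c \<sigma> f\<sigma>(n\<sigma>) \<le> 0. Positivity of c is independent of the representative of the cycle, since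
  every k-cell of a representative contains a k-cell of a common subdivision.

  Part (2) is the definition of concavity applied to the balancing condition on U.\<close>

section \<open>Directions and inward facet normals\<close>

definition diff_span :: "'a::real_vector set \<Rightarrow> 'a set" where
  "diff_span S = span {y - x | y x. y \<in> S \<and> x \<in> S}"

lemma subspace_diff_span [simp]: "subspace (diff_span S)"
  by (simp add: diff_span_def)

lemma span_diff_span [simp]: "span (diff_span S) = diff_span S"
  by (simp add: span_eq_iff)

lemma diff_span_mono: "S \<subseteq> T \<Longrightarrow> diff_span S \<subseteq> diff_span T"
  unfolding diff_span_def by (rule span_mono) blast

lemma diff_in_diff_span: "y \<in> S \<Longrightarrow> x \<in> S \<Longrightarrow> y - x \<in> diff_span S"
  unfolding diff_span_def by (rule span_base) blast

lemma diff_span_eq_span_translation: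
  assumes "x0 \<in> S"
  shows "diff_span S = span ((\<lambda>y. y - x0) ` S)"
proof
  show "diff_span S \<subseteq> span ((\<lambda>y. y - x0) ` S)"
    unfolding diff_span_def
  proof (rule span_minimal)
    show "{y - x |y x. y \<in> S \<and> x \<in> S} \<subseteq> span ((\<lambda>y. y - x0) ` S)"
    proof clarify
      fix y x assume "y \<in> S" "x \<in> S"
      then have "(y - x0) - (x - x0) \<in> span ((\<lambda>y. y - x0) ` S)"
        by (intro span_diff span_base) auto
      then show "y - x \<in> span ((\<lambda>y. y - x0) ` S)" by simp
    qed
  qed simp
  show "span ((\<lambda>y. y - x0) ` S) \<subseteq> diff_span S"
    by (rule span_minimal) (auto intro: diff_in_diff_span assms)
qed

lemma aff_dim_eq_dim_diff_span:
  fixes S :: "'a::euclidean_space set"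
  assumes "x0 \<in> S"
  shows "aff_dim S = int (dim (diff_span S))"
  using aff_dim_eq_dim_subtract[of x0 S] assms diff_span_eq_span_translation[OF assms]
  by (simp add: hull_inc)

lemma affine_hull_eq_diff_span:
  fixes S :: "'a::euclidean_space set"
  assumes "x0 \<in> S"
  shows "affine hull S = {y. y - x0 \<in> diff_span S}"
proof -
  have "affine hull S = (\<lambda>x. x0 + x) ` span ((\<lambda>y. y - x0) ` S)"
    using affine_hull_span_gen[of x0 S] assms by (simp add: hull_inc)
  then show ?thesis
    using diff_span_eq_span_translation[OF assms]
    by (auto simp: image_iff) (metis add.commute diff_add_cancel)
qed

definition facet_normal :: "'a::euclidean_space set \<Rightarrow> 'a set \<Rightarrow> 'a" where
  "facet_normal A B = (THE v. norm v = 1 \<and> v \<in> diff_span A \<and>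
      (\<forall>x\<in>B. \<forall>x'\<in>B. v \<bullet> (x - x') = 0) \<and> (\<exists>y\<in>A. \<exists>x\<in>B. v \<bullet> (y - x) > 0))"

lemma normal_vec_eq_facet_normal: "normal_vec iota s t = facet_normal (iota ` s) (iota ` t)"
  by (simp add: normal_vec_def facet_normal_def diff_span_def)

lemma codim1_subspace_eq_kernel:
  fixes A B :: "'a::euclidean_space set"
  assumes "subspace A" "subspace B" "A \<subseteq> B" "dim B \<le> dim A + 1"
    and "v \<in> B" "v \<noteq> 0" "\<And>w. w \<in> A \<Longrightarrow> v \<bullet> w = 0"
  shows "A = {w \<in> B. v \<bullet> w = 0}"
proof -
  let ?C = "{w \<in> B. v \<bullet> w = 0}"
  have C: "subspace ?C"
    using assms(2) unfolding subspace_def by (auto simp: inner_add_right)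
  have "v \<notin> ?C" using assms(6) by simp
  then have "?C \<subset> B" using assms(5) by blast
  then have "dim ?C < dim B"
    using C assms(2) by (metis dim_psubset span_eq_iff)
  then show ?thesis
    using subspace_dim_equal[OF assms(1) C] assms(3,4,7) by auto
qed

lemma face_slice_normal_one_sided:
  fixes A B :: "'a::euclidean_space set"
  assumes A: "convex A" and B: "B face_of A" and x0: "x0 \<in> B"
    and slice: "diff_span B = {w \<in> diff_span A. u \<bullet> w = 0}"
    and y1: "y1 \<in> A" and y2: "y2 \<in> A" "u \<bullet> (y2 - x0) > 0"
  shows "u \<bullet> (y1 - x0) \<ge> 0"
proof (rule ccontr)
  define a where "a = u \<bullet> (y1 - x0)"
  define b where "b = u \<bullet> (y2 - x0)"
  assume "\<not> ?thesis"
  then have ab: "a < 0" "b > 0" using y2 by (auto simp: a_def b_def)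
  define t where "t = b / (b - a)"
  have t: "0 < t" "t < 1" using ab by (auto simp: t_def field_simps)
  define z where "z = (1 - t) *\<^sub>R y2 + t *\<^sub>R y1"
  have zA: "z \<in> A" using convexD[OF A y2(1) y1, of "1 - t" t] t by (simp add: z_def)
  have "z - x0 = (1 - t) *\<^sub>R (y2 - x0) + t *\<^sub>R (y1 - x0)"
    by (simp add: z_def algebra_simps)
  then have "u \<bullet> (z - x0) = (1 - t) * b + t * a"
    by (simp add: inner_add_right a_def b_def)
  also have "\<dots> = 0" using ab by (simp add: t_def field_simps)
  finally have "z - x0 \<in> diff_span B"
    using slice diff_in_diff_span zA x0 face_of_imp_subset[OF B] by blast
  then have "z \<in> B"
    using affine_hull_eq_diff_span[OF x0] face_of_imp_eq_affine_Int[OF A B] zA by blast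
  moreover have "z \<in> open_segment y2 y1"
    using t ab unfolding z_def in_segment(2) by (auto simp: a_def b_def)
  ultimately have "y1 \<in> B" using face_ofD[OF B _ y2(1) y1] by blast
  then have "a = 0" using slice diff_in_diff_span[OF _ x0] by (auto simp: a_def)
  then show False using ab by simp
qed

lemma inward_facet_normal_exists:
  fixes A B :: "'a::euclidean_space set"
  assumes A: "convex A" and B: "B facet_of A" and x0: "x0 \<in> B"
  obtains v where "norm v = 1" "v \<in> diff_span A" "diff_span B = {w \<in> diff_span A. v \<bullet> w = 0}"
    "\<And>y. y \<in> A \<Longrightarrow> v \<bullet> (y - x0) \<ge> 0" "\<exists>y\<in>A. v \<bullet> (y - x0) > 0"
proof -
  have fB: "B face_of A" and dim: "aff_dim A = aff_dim B + 1" using B by (auto simp: facet_of_def)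
  have BA: "B \<subseteq> A" using fB face_of_imp_subset by blast
  have x0A: "x0 \<in> A" using x0 BA by blast
  have sub: "diff_span B \<subseteq> diff_span A" using diff_span_mono[OF BA] .
  have dims: "dim (diff_span A) = dim (diff_span B) + 1"
    using dim aff_dim_eq_dim_diff_span[OF x0] aff_dim_eq_dim_diff_span[OF x0A] by simp
  then have "diff_span B \<subset> diff_span A" using sub by auto
  then have "span (diff_span B) \<subset> span (diff_span A)" by simp
  then obtain v0 where v0: "v0 \<noteq> 0" "v0 \<in> diff_span A" "\<And>w. w \<in> diff_span B \<Longrightarrow> orthogonal v0 w"
    using orthogonal_to_subspace_exists_gen by (metis span_diff_span)
  have slice0: "diff_span B = {w \<in> diff_span A. v0 \<bullet> w = 0}"
    by (rule codim1_subspace_eq_kernel[OF _ _ sub _ v0(2,1)])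
      (use dims v0(3) in \<open>auto simp: orthogonal_def\<close>)
  obtain y where y: "y \<in> A" "v0 \<bullet> (y - x0) \<noteq> 0"
  proof (rule ccontr)
    assume "\<not> thesis"
    then have "A \<subseteq> affine hull B"
      using that slice0 diff_in_diff_span[OF _ x0A] affine_hull_eq_diff_span[OF x0] by auto
    then have "aff_dim A \<le> aff_dim B" by (metis aff_dim_affine_hull aff_dim_subset)
    then show False using dim by simp
  qed
  define v where "v = (sgn (v0 \<bullet> (y - x0)) / norm v0) *\<^sub>R v0"
  have vw: "v \<bullet> w = 0 \<longleftrightarrow> v0 \<bullet> w = 0" for w
    using y(2) v0(1) by (simp add: v_def sgn_if)
  have slice: "diff_span B = {w \<in> diff_span A. v \<bullet> w = 0}" using slice0 vw by simp
  have pos: "v \<bullet> (y - x0) > 0"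
    using y(2) v0(1) by (simp add: v_def sgn_if divide_simps)
  show thesis
  proof (rule that)
    show "norm v = 1" using y(2) v0(1) by (simp add: v_def sgn_if)
    show "v \<in> diff_span A" using v0(2) by (simp add: v_def subspace_scale)
    show "\<And>y'. y' \<in> A \<Longrightarrow> v \<bullet> (y' - x0) \<ge> 0"
      using face_slice_normal_one_sided[OF A fB x0 slice _ y(1) pos] .
  qed (use slice pos y(1) in auto)
qed

lemma facet_normal_eqI:
  fixes A B :: "'a::euclidean_space set"
  assumes x0: "x0 \<in> B"
    and v: "norm v = 1" "v \<in> diff_span A" "diff_span B = {w \<in> diff_span A. v \<bullet> w = 0}"
      "\<And>y. y \<in> A \<Longrightarrow> v \<bullet> (y - x0) \<ge> 0" "\<exists>y\<in>A. v \<bullet> (y - x0) > 0"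
  shows "facet_normal A B = v"
  unfolding facet_normal_def
proof (rule the_equality)
  have "v \<bullet> (x - x') = 0" if "x \<in> B" "x' \<in> B" for x x'
    using v(3) diff_in_diff_span[OF that] by blast
  then show "norm v = 1 \<and> v \<in> diff_span A \<and> (\<forall>x\<in>B. \<forall>x'\<in>B. v \<bullet> (x - x') = 0) \<and>
      (\<exists>y\<in>A. \<exists>x\<in>B. v \<bullet> (y - x) > 0)"
    using v(1,2,5) x0 by blast
  fix u
  assume u: "norm u = 1 \<and> u \<in> diff_span A \<and> (\<forall>x\<in>B. \<forall>x'\<in>B. u \<bullet> (x - x') = 0) \<and>
      (\<exists>y\<in>A. \<exists>x\<in>B. u \<bullet> (y - x) > 0)"
  have u_orth: "u \<bullet> w = 0" if "w \<in> diff_span B" for w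
    using orthogonal_to_span[of w "{y - x | y x. y \<in> B \<and> x \<in> B}" u] u that
    by (auto simp: diff_span_def orthogonal_def)
  define r where "r = u - (u \<bullet> v) *\<^sub>R v"
  have "v \<bullet> r = 0" using v(1) by (simp add: r_def inner_diff_right norm_eq_1 inner_commute)
  moreover have "r \<in> diff_span A" using u v(2) by (simp add: r_def subspace_diff subspace_scale)
  ultimately have "r \<in> diff_span B" using v(3) by blast
  then have "r \<bullet> r = 0"
    using u_orth \<open>v \<bullet> r = 0\<close> by (simp add: r_def inner_diff_left)
  then have uv: "u = (u \<bullet> v) *\<^sub>R v" by (simp add: r_def)
  then have abs_uv: "\<bar>u \<bullet> v\<bar> = 1" using u v(1) by (metis mult.right_neutral norm_scaleR)
  obtain y x where yx: "y \<in> A" "x \<in> B" "u \<bullet> (y - x) > 0" using u by blast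
  have "v \<bullet> (y - x) = v \<bullet> (y - x0) - v \<bullet> (x - x0)" by (simp add: inner_diff_right)
  also have "v \<bullet> (x - x0) = 0" using v(3) diff_in_diff_span[OF yx(2) x0] by blast
  finally have "v \<bullet> (y - x) \<ge> 0" using v(4)[OF yx(1)] by simp
  then have "u \<bullet> v > 0"
    using yx(3) uv by (metis inner_scaleR_left not_le zero_less_mult_iff)
  then have "u \<bullet> v = 1" using abs_uv by simp
  then show "u = v" using uv by simp
qed

lemma
  fixes A B :: "'a::euclidean_space set"
  assumes A: "convex A" and B: "B facet_of A"
  shows norm_facet_normal: "norm (facet_normal A B) = 1"
    and facet_normal_in_diff_span: "facet_normal A B \<in> diff_span A"
    and diff_span_facet: "diff_span B = {w \<in> diff_span A. facet_normal A B \<bullet> w = 0}"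
    and facet_normal_nonneg: "y \<in> A \<Longrightarrow> x \<in> B \<Longrightarrow> facet_normal A B \<bullet> (y - x) \<ge> 0"
proof -
  obtain x0 where x0: "x0 \<in> B" using B by (auto simp: facet_of_def)
  obtain v where v: "norm v = 1" "v \<in> diff_span A" "diff_span B = {w \<in> diff_span A. v \<bullet> w = 0}"
    "\<And>y. y \<in> A \<Longrightarrow> v \<bullet> (y - x0) \<ge> 0" "\<exists>y\<in>A. v \<bullet> (y - x0) > 0"
    using inward_facet_normal_exists[OF A B x0] by blast
  have n: "facet_normal A B = v" using facet_normal_eqI[OF x0 v] .
  show "norm (facet_normal A B) = 1" "facet_normal A B \<in> diff_span A"
    "diff_span B = {w \<in> diff_span A. facet_normal A B \<bullet> w = 0}"
    using n v by auto
  assume "y \<in> A" "x \<in> B"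
  have "v \<bullet> (y - x) = v \<bullet> (y - x0) - v \<bullet> (x - x0)" by (simp add: inner_diff_right)
  also have "v \<bullet> (x - x0) = 0" using v(3) diff_in_diff_span[OF \<open>x \<in> B\<close> x0] by blast
  finally show "facet_normal A B \<bullet> (y - x) \<ge> 0" using n v(4)[OF \<open>y \<in> A\<close>] by simp
qed

lemma facet_normal_orthogonal:
  fixes A B :: "'a::euclidean_space set"
  assumes "convex A" "B facet_of A" "w \<in> diff_span B"
  shows "facet_normal A B \<bullet> w = 0"
  using diff_span_facet[OF assms(1,2)] assms(3) by blast

lemma facet_eq_hyperplane_slice:
  fixes A B :: "'a::euclidean_space set"
  assumes A: "convex A" and B: "B facet_of A" and x0: "x0 \<in> B"
  shows "B = {y \<in> A. facet_normal A B \<bullet> (y - x0) = 0}"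
proof
  have "B \<subseteq> A" using B facet_of_imp_subset by blast
  then show "B \<subseteq> {y \<in> A. facet_normal A B \<bullet> (y - x0) = 0}"
    using facet_normal_orthogonal[OF A B] diff_in_diff_span x0 by blast
  show "{y \<in> A. facet_normal A B \<bullet> (y - x0) = 0} \<subseteq> B"
  proof clarify
    fix y assume y: "y \<in> A" "facet_normal A B \<bullet> (y - x0) = 0"
    have "y - x0 \<in> diff_span A" using diff_in_diff_span y(1) x0 \<open>B \<subseteq> A\<close> by blast
    then have "y - x0 \<in> diff_span B" using diff_span_facet[OF A B] y(2) by blast
    then show "y \<in> B"
      using affine_hull_eq_diff_span[OF x0] face_of_imp_eq_affine_Int[OF A facet_of_imp_face_of[OF B]] y(1)
      by blast
  qed
qed

lemma facet_normal_pos_rel_interior: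
  fixes A B :: "'a::euclidean_space set"
  assumes A: "convex A" and B: "B facet_of A" and q: "q \<in> rel_interior A" and x: "x \<in> B"
  shows "facet_normal A B \<bullet> (q - x) > 0"
proof -
  have qA: "q \<in> A" using q rel_interior_subset by blast
  have "B \<noteq> A" using B by (auto simp: facet_of_def)
  then have "q \<notin> B" using face_of_disjoint_rel_interior[OF facet_of_imp_face_of[OF B]] q by blast
  then have "facet_normal A B \<bullet> (q - x) \<noteq> 0" using facet_eq_hyperplane_slice[OF A B x] qA by blast
  then show ?thesis using facet_normal_nonneg[OF A B qA x] by simp
qed

text \<open>Write q - p = \<alpha> n + d with q \<in> rel_interior A and d parallel to B. The segment from the
  point p - s d of B to q crosses the normal line through p at p + \<delta> n with \<delta> > 0.\<close>

lemma facet_normal_points_inward: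
  fixes A B :: "'a::euclidean_space set"
  assumes A: "convex A" and B: "B facet_of A" and p: "p \<in> rel_interior B"
  obtains \<delta> where "\<delta> > 0" "\<And>t. 0 \<le> t \<Longrightarrow> t \<le> \<delta> \<Longrightarrow> p + t *\<^sub>R facet_normal A B \<in> A"
proof -
  define n where "n = facet_normal A B"
  have pB: "p \<in> B" using p rel_interior_subset by blast
  have BA: "B \<subseteq> A" using B facet_of_imp_subset by blast
  obtain q where q: "q \<in> rel_interior A" using A BA pB rel_interior_eq_empty by blast
  have qA: "q \<in> A" using q rel_interior_subset by blast
  define \<alpha> where "\<alpha> = n \<bullet> (q - p)"
  have \<alpha>: "\<alpha> > 0" using facet_normal_pos_rel_interior[OF A B q pB] by (simp add: \<alpha>_def n_def)
  define d where "d = (q - p) - \<alpha> *\<^sub>R n"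
  have "q - p \<in> diff_span A" using diff_in_diff_span qA pB BA by blast
  then have "d \<in> diff_span A"
    using facet_normal_in_diff_span[OF A B] by (simp add: d_def n_def subspace_diff subspace_scale)
  moreover have "n \<bullet> d = 0"
    using norm_facet_normal[OF A B] by (simp add: d_def \<alpha>_def n_def inner_diff_right norm_eq_1)
  ultimately have d: "d \<in> diff_span B" using diff_span_facet[OF A B] by (simp add: n_def)
  have "p + d \<in> affine hull B" using affine_hull_eq_diff_span[OF pB] d by simp
  then obtain m where m: "m > 1" "(1 - m) *\<^sub>R (p + d) + m *\<^sub>R p \<in> B"
    using convex_rel_interior_if[OF face_of_imp_convex[OF facet_of_imp_face_of[OF B]] p] by blast
  define s where "s = m - 1"
  have s: "s > 0" using m(1) by (simp add: s_def)
  have b: "p - s *\<^sub>R d \<in> B" using m(2) by (simp add: s_def algebra_simps)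
  define \<theta> where "\<theta> = s / (1 + s)"
  have \<theta>: "0 < \<theta>" "\<theta> < 1" "(1 - \<theta>) * s = \<theta>" using s by (auto simp: \<theta>_def field_simps)
  define \<delta> where "\<delta> = \<theta> * \<alpha>"
  have \<delta>: "\<delta> > 0" using \<theta> \<alpha> by (simp add: \<delta>_def)
  have "(1 - \<theta>) *\<^sub>R (p - s *\<^sub>R d) + \<theta> *\<^sub>R q = (1 - \<theta>) *\<^sub>R p - ((1 - \<theta>) * s) *\<^sub>R d + \<theta> *\<^sub>R q"
    by (simp add: algebra_simps)
  also have "\<dots> = p + \<theta> *\<^sub>R ((q - p) - d)" unfolding \<theta>(3) by (simp add: algebra_simps)
  also have "\<dots> = p + \<delta> *\<^sub>R n" by (simp add: d_def \<delta>_def)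
  finally have c: "p + \<delta> *\<^sub>R n \<in> A"
    using convexD[OF A, of "p - s *\<^sub>R d" q "1 - \<theta>" \<theta>] b BA qA \<theta> by auto
  show thesis
  proof (rule that[OF \<delta>])
    fix t assume t: "0 \<le> t" "t \<le> \<delta>"
    have "p + t *\<^sub>R n = (1 - t / \<delta>) *\<^sub>R p + (t / \<delta>) *\<^sub>R (p + \<delta> *\<^sub>R n)"
      using \<delta> by (simp add: algebra_simps)
    also have "\<dots> \<in> A" using convexD[OF A _ c, of p "1 - t / \<delta>" "t / \<delta>"] pB BA t \<delta> by auto
    finally show "p + t *\<^sub>R facet_normal A B \<in> A" by (simp add: n_def)
  qed
qed

section \<open>Plane geometry\<close>

text \<open>Planar lemmas in coordinates (a, b) with respect to an orthonormal pair: s a b is the pairing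
  with a vector w = (X, Y) and t a b the pairing with w turned by a right angle, so that on the
  open half-plane s > 0 the slope t / s orders unit vectors by their angle.\<close>

lemma plane_coords_eqI:
  fixes X Y :: real
  assumes XY: "X\<^sup>2 + Y\<^sup>2 > 0"
    and s: "a * X + b * Y = a' * X + b' * Y" and t: "b * X - a * Y = b' * X - a' * Y"
  shows "a = a' \<and> b = b'"
proof -
  have "a * (X\<^sup>2 + Y\<^sup>2) = (a * X + b * Y) * X - (b * X - a * Y) * Y"
    and "b * (X\<^sup>2 + Y\<^sup>2) = (a * X + b * Y) * Y + (b * X - a * Y) * X"
    and "a' * (X\<^sup>2 + Y\<^sup>2) = (a' * X + b' * Y) * X - (b' * X - a' * Y) * Y"
    and "b' * (X\<^sup>2 + Y\<^sup>2) = (a' * X + b' * Y) * Y + (b' * X - a' * Y) * X"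
    by (simp_all add: power2_eq_square algebra_simps)
  then show ?thesis using s t XY by (metis less_irrefl mult_right_cancel)
qed

lemma plane_pos_combination_of_ratio_between:
  fixes X Y :: real
  defines "s \<equiv> \<lambda>a b. a * X + b * Y" and "t \<equiv> \<lambda>a b. b * X - a * Y"
  assumes XY: "X\<^sup>2 + Y\<^sup>2 > 0"
    and si: "s ai bi > 0" and sm: "s am bm > 0" and sj: "s aj bj > 0"
    and lt: "t ai bi / s ai bi < t am bm / s am bm" "t am bm / s am bm < t aj bj / s aj bj"
  shows "\<exists>l m. l > 0 \<and> m > 0 \<and> am = l * ai + m * aj \<and> bm = l * bi + m * bj"
proof -
  define Si Sm Sj where "Si = s ai bi" and "Sm = s am bm" and "Sj = s aj bj"
  define Ti Tm Tj where "Ti = t ai bi" and "Tm = t am bm" and "Tj = t aj bj"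
  have c1: "Ti * Sm < Tm * Si" and c2: "Tm * Sj < Tj * Sm"
    using lt si sm sj by (simp_all add: Si_def Sm_def Sj_def Ti_def Tm_def Tj_def field_simps)
  define D where "D = Si * Tj - Ti * Sj"
  have "D * Sm = Si * (Tj * Sm - Tm * Sj) + Sj * (Tm * Si - Ti * Sm)" by (simp add: D_def algebra_simps)
  also have "\<dots> > 0" using c1 c2 si sj by (simp add: Si_def Sj_def add_pos_pos)
  finally have D: "D > 0" using sm by (simp add: Sm_def zero_less_mult_iff)
  define l where "l = (Sm * Tj - Tm * Sj) / D"
  define m where "m = (Si * Tm - Ti * Sm) / D"
  have lm: "l > 0" "m > 0" using c1 c2 D by (simp_all add: l_def m_def algebra_simps)
  have lD: "l * D = Sm * Tj - Tm * Sj" and mD: "m * D = Si * Tm - Ti * Sm"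
    using D by (simp_all add: l_def m_def)
  have "(l * Si + m * Sj) * D = Si * (l * D) + Sj * (m * D)"
    and "(l * Ti + m * Tj) * D = Ti * (l * D) + Tj * (m * D)" by (simp_all add: algebra_simps)
  then have "(l * Si + m * Sj) * D = Sm * D" "(l * Ti + m * Tj) * D = Tm * D"
    unfolding lD mD by (simp_all add: D_def algebra_simps)
  then have "Sm = l * Si + m * Sj" "Tm = l * Ti + m * Tj" using D by simp_all
  then have "am = l * ai + m * aj \<and> bm = l * bi + m * bj"
    by (intro plane_coords_eqI[OF XY])
      (simp_all add: Si_def Sm_def Sj_def Ti_def Tm_def Tj_def s_def t_def algebra_simps)
  then show ?thesis using lm by blast
qed

lemma plane_ratio_inj_on_unit_vectors:
  fixes X Y :: real
  defines "s \<equiv> \<lambda>a b. a * X + b * Y" and "t \<equiv> \<lambda>a b. b * X - a * Y"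
  assumes XY: "X\<^sup>2 + Y\<^sup>2 > 0"
    and si: "s ai bi > 0" and sj: "s aj bj > 0"
    and ui: "ai\<^sup>2 + bi\<^sup>2 = 1" and uj: "aj\<^sup>2 + bj\<^sup>2 = 1"
    and eq: "t ai bi / s ai bi = t aj bj / s aj bj"
  shows "ai = aj \<and> bi = bj"
proof -
  define c where "c = s aj bj / s ai bi"
  have c: "c > 0" using si sj by (simp add: c_def)
  have "s aj bj = c * s ai bi" "t aj bj = c * t ai bi"
    using si sj eq by (simp_all add: c_def field_simps)
  then have eq: "aj = c * ai \<and> bj = c * bi"
    by (intro plane_coords_eqI[OF XY]) (simp_all add: s_def t_def algebra_simps)
  then have "c\<^sup>2 * (ai\<^sup>2 + bi\<^sup>2) = 1" using uj by (simp add: power_mult_distrib algebra_simps)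
  then have "c = 1" using ui c by (simp add: power2_eq_1_iff)
  then show ?thesis using eq by simp
qed

lemma plane_three_unit_vectors:
  fixes X Y :: real
  defines "s \<equiv> \<lambda>a b. a * X + b * Y"
  assumes XY: "X\<^sup>2 + Y\<^sup>2 > 0"
    and s1: "s a1 b1 > 0" and s2: "s a2 b2 > 0" and s3: "s a3 b3 > 0"
    and u1: "a1\<^sup>2 + b1\<^sup>2 = 1" and u2: "a2\<^sup>2 + b2\<^sup>2 = 1" and u3: "a3\<^sup>2 + b3\<^sup>2 = 1"
    and d12: "(a1, b1) \<noteq> (a2, b2)" and d13: "(a1, b1) \<noteq> (a3, b3)" and d23: "(a2, b2) \<noteq> (a3, b3)"
  shows "(\<exists>l m. l > 0 \<and> m > 0 \<and> a1 = l * a2 + m * a3 \<and> b1 = l * b2 + m * b3) \<or>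
         (\<exists>l m. l > 0 \<and> m > 0 \<and> a2 = l * a1 + m * a3 \<and> b2 = l * b1 + m * b3) \<or>
         (\<exists>l m. l > 0 \<and> m > 0 \<and> a3 = l * a1 + m * a2 \<and> b3 = l * b1 + m * b2)"
proof -
  define t where "t = (\<lambda>a b. b * X - a * Y)"
  define r where "r = (\<lambda>a b. t a b / s a b)"
  have s1': "a1 * X + b1 * Y > 0" and s2': "a2 * X + b2 * Y > 0" and s3': "a3 * X + b3 * Y > 0"
    using s1 s2 s3 by (simp_all add: s_def)
  note B0 = plane_pos_combination_of_ratio_between[of X Y, OF XY]
  note I = plane_ratio_inj_on_unit_vectors[of X Y, OF XY]
  have r12: "r a1 b1 \<noteq> r a2 b2" using I[OF s1' s2' u1 u2] d12 by (auto simp: r_def s_def t_def)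
  have r13: "r a1 b1 \<noteq> r a3 b3" using I[OF s1' s3' u1 u3] d13 by (auto simp: r_def s_def t_def)
  have r23: "r a2 b2 \<noteq> r a3 b3" using I[OF s2' s3' u2 u3] d23 by (auto simp: r_def s_def t_def)
  have B': "\<exists>l m. l > 0 \<and> m > 0 \<and> am = l * ai + m * aj \<and> bm = l * bi + m * bj"
    if h: "s ai bi > 0" "s am bm > 0" "s aj bj > 0"
       "(r ai bi < r am bm \<and> r am bm < r aj bj) \<or> (r aj bj < r am bm \<and> r am bm < r ai bi)"
    for ai bi am bm aj bj
    using h(4)
  proof (elim disjE conjE)
    assume "r ai bi < r am bm" "r am bm < r aj bj"
    then show ?thesis using B0[of ai bi am bm aj bj] h(1-3) by (simp add: r_def s_def t_def)
  next
    assume "r aj bj < r am bm" "r am bm < r ai bi"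
    then obtain l m where "l > 0" "m > 0" "am = l * aj + m * ai" "bm = l * bj + m * bi"
      using B0[of aj bj am bm ai bi] h(1-3) by (auto simp: r_def s_def t_def)
    then show ?thesis by (metis add.commute)
  qed
  consider "r a1 b1 < r a2 b2 \<and> r a2 b2 < r a3 b3 \<or> r a3 b3 < r a2 b2 \<and> r a2 b2 < r a1 b1"
    | "r a2 b2 < r a1 b1 \<and> r a1 b1 < r a3 b3 \<or> r a3 b3 < r a1 b1 \<and> r a1 b1 < r a2 b2"
    | "r a1 b1 < r a3 b3 \<and> r a3 b3 < r a2 b2 \<or> r a2 b2 < r a3 b3 \<and> r a3 b3 < r a1 b1"
    using r12 r13 r23 by linarith
  then show ?thesis
  proof cases
    case 1 then show ?thesis using B'[OF s1 s2 s3] by blast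
  next
    case 2 then show ?thesis using B'[OF s2 s1 s3] by blast
  next
    case 3 then show ?thesis using B'[OF s1 s3 s2] by blast
  qed
qed

lemma plane_orthonormal_orientation:
  fixes a b c d :: real
  assumes "a\<^sup>2 + b\<^sup>2 = 1" "c\<^sup>2 + d\<^sup>2 = 1" "a * c + b * d = 0" "b > 0" "c > 0"
  shows "a * d - b * c = -1"
proof -
  define k where "k = a * d - b * c"
  have "c * (a\<^sup>2 + b\<^sup>2) = - b * k + a * (a * c + b * d)"
    by (simp add: k_def power2_eq_square algebra_simps)
  then have c: "c = - b * k" using assms(1,3) by simp
  have "d * (a\<^sup>2 + b\<^sup>2) = a * k + b * (a * c + b * d)"
    by (simp add: k_def power2_eq_square algebra_simps)
  then have d: "d = a * k" using assms(1,3) by simp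
  have "1 = c\<^sup>2 + d\<^sup>2" using assms(2) by simp
  also have "\<dots> = k\<^sup>2 * (a\<^sup>2 + b\<^sup>2)" by (simp add: c d power2_eq_square algebra_simps)
  finally have k2: "k\<^sup>2 = 1" using assms(1) by simp
  have "b * k < 0" using c assms(5) by linarith
  then have "k < 0" using assms(4) by (simp add: mult_less_0_iff)
  then show ?thesis using k2 by (simp add: k_def power2_eq_1_iff)
qed

lemma orthonormal_pair_inner:
  fixes n u :: "'b::real_inner"
  assumes "norm n = 1" "norm u = 1" "n \<bullet> u = 0"
  shows "(a *\<^sub>R n + b *\<^sub>R u) \<bullet> (c *\<^sub>R n + d *\<^sub>R u) = a * c + b * d"
  using assms by (simp add: inner_add_left inner_add_right norm_eq_1 inner_commute)

lemma unit_vectors_in_halfplane_pos_combination: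
  fixes e1 e2 w v1 v2 v3 :: "'a::real_inner"
  assumes e: "norm e1 = 1" "norm e2 = 1" "e1 \<bullet> e2 = 0"
    and v: "\<And>v. v \<in> {v1, v2, v3} \<Longrightarrow>
      v = (v \<bullet> e1) *\<^sub>R e1 + (v \<bullet> e2) *\<^sub>R e2 \<and> norm v = 1 \<and> v \<bullet> w > 0"
    and d: "v1 \<noteq> v2" "v1 \<noteq> v3" "v2 \<noteq> v3"
  obtains l m where "l > 0" "m > 0"
    "v1 = l *\<^sub>R v2 + m *\<^sub>R v3 \<or> v2 = l *\<^sub>R v1 + m *\<^sub>R v3 \<or> v3 = l *\<^sub>R v1 + m *\<^sub>R v2"
proof -
  define X where "X = e1 \<bullet> w"
  define Y where "Y = e2 \<bullet> w"
  have coords: "v = (v \<bullet> e1) *\<^sub>R e1 + (v \<bullet> e2) *\<^sub>R e2" "(v \<bullet> e1)\<^sup>2 + (v \<bullet> e2)\<^sup>2 = 1"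
    "(v \<bullet> e1) * X + (v \<bullet> e2) * Y > 0" if "v \<in> {v1, v2, v3}" for v
  proof -
    show v_eq: "v = (v \<bullet> e1) *\<^sub>R e1 + (v \<bullet> e2) *\<^sub>R e2" using v[OF that] by blast
    have "1 = v \<bullet> v" using v[OF that] by (simp add: norm_eq_1)
    also have "\<dots> = (v \<bullet> e1)\<^sup>2 + (v \<bullet> e2)\<^sup>2"
      by (subst (1 2) v_eq) (simp add: orthonormal_pair_inner[OF e] power2_eq_square)
    finally show "(v \<bullet> e1)\<^sup>2 + (v \<bullet> e2)\<^sup>2 = 1" by simp
    have "v \<bullet> w = (v \<bullet> e1) * X + (v \<bullet> e2) * Y"
      by (subst v_eq) (simp add: inner_add_left X_def Y_def)
    then show "(v \<bullet> e1) * X + (v \<bullet> e2) * Y > 0" using v[OF that] by simp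
  qed
  have "X \<noteq> 0 \<or> Y \<noteq> 0" using coords(3)[of v1] by auto
  then have XY: "X\<^sup>2 + Y\<^sup>2 > 0" by (simp add: sum_power2_gt_zero_iff)
  have dist: "(v \<bullet> e1, v \<bullet> e2) \<noteq> (v' \<bullet> e1, v' \<bullet> e2)"
    if "v \<in> {v1, v2, v3}" "v' \<in> {v1, v2, v3}" "v \<noteq> v'" for v v'
    using coords(1)[OF that(1)] coords(1)[OF that(2)] that(3) by auto
  have comb: "v = l *\<^sub>R v' + m *\<^sub>R v''"
    if "v \<in> {v1, v2, v3}" "v' \<in> {v1, v2, v3}" "v'' \<in> {v1, v2, v3}"
      "v \<bullet> e1 = l * (v' \<bullet> e1) + m * (v'' \<bullet> e1)" "v \<bullet> e2 = l * (v' \<bullet> e2) + m * (v'' \<bullet> e2)"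
    for v v' v'' l m
  proof -
    have "v = (l * (v' \<bullet> e1) + m * (v'' \<bullet> e1)) *\<^sub>R e1 + (l * (v' \<bullet> e2) + m * (v'' \<bullet> e2)) *\<^sub>R e2"
      using coords(1)[OF that(1)] that(4,5) by simp
    also have "\<dots> = l *\<^sub>R ((v' \<bullet> e1) *\<^sub>R e1 + (v' \<bullet> e2) *\<^sub>R e2) + m *\<^sub>R ((v'' \<bullet> e1) *\<^sub>R e1 + (v'' \<bullet> e2) *\<^sub>R e2)"
      by (simp add: algebra_simps)
    finally show ?thesis using coords(1)[OF that(2)] coords(1)[OF that(3)] by simp
  qed
  have "(\<exists>l m. l > 0 \<and> m > 0 \<and> v1 \<bullet> e1 = l * (v2 \<bullet> e1) + m * (v3 \<bullet> e1) \<and> v1 \<bullet> e2 = l * (v2 \<bullet> e2) + m * (v3 \<bullet> e2)) \<or>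
      (\<exists>l m. l > 0 \<and> m > 0 \<and> v2 \<bullet> e1 = l * (v1 \<bullet> e1) + m * (v3 \<bullet> e1) \<and> v2 \<bullet> e2 = l * (v1 \<bullet> e2) + m * (v3 \<bullet> e2)) \<or>
      (\<exists>l m. l > 0 \<and> m > 0 \<and> v3 \<bullet> e1 = l * (v1 \<bullet> e1) + m * (v2 \<bullet> e1) \<and> v3 \<bullet> e2 = l * (v1 \<bullet> e2) + m * (v2 \<bullet> e2))"
    by (rule plane_three_unit_vectors[OF XY]) (use coords dist d in auto)
  then show thesis using comb that by blast
qed

lemma orthonormal_basis_change_orientation:
  fixes n1 u1 n2 u2 :: "'a::real_inner"
  assumes e1: "norm n1 = 1" "norm u1 = 1" "n1 \<bullet> u1 = 0"
    and e2: "norm n2 = 1" "norm u2 = 1" "n2 \<bullet> u2 = 0"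
    and n2: "n2 = \<alpha> *\<^sub>R n1 + \<beta> *\<^sub>R u1" and u2: "u2 = \<gamma> *\<^sub>R n1 + \<delta> *\<^sub>R u1"
    and "\<beta> > 0" "\<gamma> > 0"
  shows "\<alpha> * \<delta> - \<beta> * \<gamma> = -1"
proof (rule plane_orthonormal_orientation)
  note coords = orthonormal_pair_inner[OF e1]
  have "1 = n2 \<bullet> n2" using e2(1) by (simp add: norm_eq_1)
  also have "\<dots> = \<alpha>\<^sup>2 + \<beta>\<^sup>2" by (simp add: n2 coords power2_eq_square)
  finally show "\<alpha>\<^sup>2 + \<beta>\<^sup>2 = 1" by simp
  have "1 = u2 \<bullet> u2" using e2(2) by (simp add: norm_eq_1)
  also have "\<dots> = \<gamma>\<^sup>2 + \<delta>\<^sup>2" by (simp add: u2 coords power2_eq_square)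
  finally show "\<gamma>\<^sup>2 + \<delta>\<^sup>2 = 1" by simp
  show "\<alpha> * \<gamma> + \<beta> * \<delta> = 0" using e2(3) by (simp add: n2 u2 coords)
qed (use assms in auto)

section \<open>Faces of codimension two\<close>

locale codim2_face =
  fixes S R :: "'a::euclidean_space set"
  assumes polyhedron_S: "polyhedron S" and face_R: "R face_of S" and nonempty_R: "R \<noteq> {}"
    and aff_dim_S: "aff_dim S = aff_dim R + 2"
begin

lemma convex_S: "convex S"
  using polyhedron_S polyhedron_imp_convex by blast

lemma facet_through_R:
  assumes "T facet_of S" "R \<subseteq> T"
  shows "convex T" "R facet_of T"
proof -
  show "convex T" using assms(1) face_of_imp_convex facet_of_imp_face_of by blast
  have "R face_of T" using face_of_subset[OF face_R assms(2) facet_of_imp_subset[OF assms(1)]] .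
  then show "R facet_of T" using assms(1) nonempty_R aff_dim_S by (auto simp: facet_of_def)
qed

lemma facet_normal_orthogonal_R:
  assumes "T facet_of S" "R \<subseteq> T" "v \<in> diff_span R"
  shows "facet_normal S T \<bullet> v = 0"
  using facet_normal_orthogonal[OF convex_S assms(1)] diff_span_mono[OF assms(2)] assms(3) by blast

lemma normal_of_R_in_facet:
  assumes "T facet_of S" "R \<subseteq> T"
  shows "facet_normal T R \<in> diff_span S" "norm (facet_normal T R) = 1"
    "v \<in> diff_span R \<Longrightarrow> facet_normal T R \<bullet> v = 0"
    "facet_normal S T \<bullet> facet_normal T R = 0"
proof -
  note T = facet_through_R[OF assms]
  show "facet_normal T R \<in> diff_span S"
    using facet_normal_in_diff_span[OF T] diff_span_mono[OF facet_of_imp_subset[OF assms(1)]] by blast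
  show "norm (facet_normal T R) = 1" using norm_facet_normal[OF T] .
  show "v \<in> diff_span R \<Longrightarrow> facet_normal T R \<bullet> v = 0" using facet_normal_orthogonal[OF T] .
  show "facet_normal S T \<bullet> facet_normal T R = 0"
    using facet_normal_orthogonal[OF convex_S assms(1) facet_normal_in_diff_span[OF T]] .
qed

lemma normal_plane_decomposition:
  assumes T: "T facet_of S" "R \<subseteq> T"
    and w: "w \<in> diff_span S" "\<And>v. v \<in> diff_span R \<Longrightarrow> w \<bullet> v = 0"
  shows "w = (w \<bullet> facet_normal S T) *\<^sub>R facet_normal S T + (w \<bullet> facet_normal T R) *\<^sub>R facet_normal T R"
proof -
  define n where "n = facet_normal S T"
  define u where "u = facet_normal T R"
  note TR = facet_through_R[OF T]
  note U = normal_of_R_in_facet[OF T, folded n_def u_def]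
  have n: "norm n = 1" "n \<in> diff_span S" using norm_facet_normal[OF convex_S T(1)]
      facet_normal_in_diff_span[OF convex_S T(1)] by (simp_all add: n_def)
  define r where "r = w - (w \<bullet> n) *\<^sub>R n - (w \<bullet> u) *\<^sub>R u"
  have "r \<in> diff_span S" using w(1) n(2) U(1) by (simp add: r_def subspace_diff subspace_scale)
  moreover have nr: "n \<bullet> r = 0" using n(1) U(4)
    by (simp add: r_def inner_diff_right norm_eq_1 inner_commute)
  ultimately have "r \<in> diff_span T" using diff_span_facet[OF convex_S T(1)] by (simp add: n_def)
  moreover have ur: "u \<bullet> r = 0" using U(2,4)
    by (simp add: r_def inner_diff_right norm_eq_1 inner_commute)
  ultimately have "r \<in> diff_span R" using diff_span_facet[OF TR] by (simp add: u_def)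
  then have "w \<bullet> r = 0" using w(2) by blast
  then have "r \<bullet> r = 0" using nr ur by (simp add: r_def inner_diff_left inner_commute)
  then have "r = 0" by simp
  then show ?thesis unfolding r_def n_def[symmetric] u_def[symmetric] by (simp add: algebra_simps)
qed

lemma facet_normal_inj:
  assumes "T1 facet_of S" "R \<subseteq> T1" "T2 facet_of S" "R \<subseteq> T2"
    and "facet_normal S T1 = facet_normal S T2"
  shows "T1 = T2"
proof -
  obtain p where "p \<in> R" using nonempty_R by blast
  then show ?thesis
    using facet_eq_hyperplane_slice[OF convex_S assms(1)] facet_eq_hyperplane_slice[OF convex_S assms(3)]
      assms by (metis subsetD)
qed

lemma facet_normal_nonneg_other_facet:
  assumes T1: "T1 facet_of S" "R \<subseteq> T1" and T2: "T2 facet_of S" "R \<subseteq> T2"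
  shows "facet_normal S T2 \<bullet> facet_normal T1 R \<ge> 0"
proof -
  define n1 where "n1 = facet_normal S T1"
  define n2 where "n2 = facet_normal S T2"
  define u1 where "u1 = facet_normal T1 R"
  obtain x where x: "x \<in> R" using nonempty_R by blast
  obtain y where y: "y \<in> rel_interior T1"
    using facet_through_R(1)[OF T1] rel_interior_eq_empty x T1(2) by blast
  have yT1: "y \<in> T1" using y rel_interior_subset by blast
  have "u1 \<bullet> (y - x) > 0"
    using facet_normal_pos_rel_interior[OF facet_through_R[OF T1] y x] by (simp add: u1_def)
  moreover have "n2 \<bullet> (y - x) \<ge> 0"
    using facet_normal_nonneg[OF convex_S T2(1)] yT1 x T2(2) facet_of_imp_subset[OF T1(1)]
    by (auto simp: n2_def)
  moreover have "n2 \<bullet> (y - x) = (n2 \<bullet> n1) * (n1 \<bullet> (y - x)) + (n2 \<bullet> u1) * (u1 \<bullet> (y - x))"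
  proof -
    have "n2 = (n2 \<bullet> n1) *\<^sub>R n1 + (n2 \<bullet> u1) *\<^sub>R u1"
      using normal_plane_decomposition[OF T1 facet_normal_in_diff_span[OF convex_S T2(1)]]
        facet_normal_orthogonal_R[OF T2] by (simp add: n1_def n2_def u1_def)
    then show ?thesis by (metis inner_add_left inner_scaleR_left)
  qed
  moreover have "n1 \<bullet> (y - x) = 0"
    using facet_normal_orthogonal[OF convex_S T1(1) diff_in_diff_span[OF yT1 subsetD[OF T1(2) x]]]
    by (simp add: n1_def)
  ultimately show ?thesis by (simp add: zero_le_mult_iff n2_def u1_def)
qed

lemma facet_normal_pos_other_facet:
  assumes T1: "T1 facet_of S" "R \<subseteq> T1" and T2: "T2 facet_of S" "R \<subseteq> T2" and ne: "T1 \<noteq> T2"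
  shows "facet_normal S T2 \<bullet> facet_normal T1 R > 0"
proof -
  define n1 where "n1 = facet_normal S T1"
  define n2 where "n2 = facet_normal S T2"
  define u1 where "u1 = facet_normal T1 R"
  have "n2 \<bullet> u1 \<noteq> 0"
  proof
    assume z: "n2 \<bullet> u1 = 0"
    have n2: "n2 = (n2 \<bullet> n1) *\<^sub>R n1"
      using normal_plane_decomposition[OF T1 facet_normal_in_diff_span[OF convex_S T2(1)]]
        facet_normal_orthogonal_R[OF T2] z by (simp add: n1_def n2_def u1_def)
    moreover have "norm n1 = 1" "norm n2 = 1"
      using norm_facet_normal convex_S T1(1) T2(1) by (auto simp: n1_def n2_def)
    ultimately have "\<bar>n2 \<bullet> n1\<bar> = 1" by (metis mult.right_neutral norm_scaleR)
    then have "n2 \<bullet> n1 = 1 \<or> n2 \<bullet> n1 = - 1" by linarith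
    then have "n2 = n1 \<or> n2 = - n1" using n2 by auto
    moreover have "n2 \<noteq> n1" using facet_normal_inj[OF T1 T2] ne by (auto simp: n1_def n2_def)
    moreover obtain x where x: "x \<in> R" using nonempty_R by blast
    moreover obtain q where "q \<in> rel_interior S"
      using convex_S rel_interior_eq_empty face_of_imp_subset[OF face_R] x by blast
    then have "n1 \<bullet> (q - x) > 0" "n2 \<bullet> (q - x) > 0"
      using facet_normal_pos_rel_interior[OF convex_S] T1 T2 x by (auto simp: n1_def n2_def)
    ultimately show False by auto
  qed
  then show ?thesis
    using facet_normal_nonneg_other_facet[OF T1 T2] by (simp add: n2_def u1_def)
qed

lemma no_facet_normal_pos_combination:
  assumes Ti: "Ti facet_of S" "R \<subseteq> Ti" and Tj: "Tj facet_of S" "R \<subseteq> Tj"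
    and Tm: "Tm facet_of S" "R \<subseteq> Tm" and ne: "Ti \<noteq> Tj" and l: "l > 0" and m: "m > 0"
    and comb: "facet_normal S Tm = l *\<^sub>R facet_normal S Ti + m *\<^sub>R facet_normal S Tj"
  shows False
proof -
  obtain p where p: "p \<in> R" using nonempty_R by blast
  have "Tm \<subseteq> Ti \<inter> Tj"
  proof
    fix y assume y: "y \<in> Tm"
    then have yS: "y \<in> S" and y0: "facet_normal S Tm \<bullet> (y - p) = 0"
      using facet_eq_hyperplane_slice[OF convex_S Tm(1)] p Tm(2) by blast+
    have gi: "facet_normal S Ti \<bullet> (y - p) \<ge> 0" and gj: "facet_normal S Tj \<bullet> (y - p) \<ge> 0"
      using facet_normal_nonneg[OF convex_S] Ti Tj yS p by blast+
    have "l * (facet_normal S Ti \<bullet> (y - p)) + m * (facet_normal S Tj \<bullet> (y - p)) = 0"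
      using y0 comb by (simp add: inner_add_left)
    then have "facet_normal S Ti \<bullet> (y - p) = 0" "facet_normal S Tj \<bullet> (y - p) = 0"
      using gi gj l m by (smt (verit) mult_pos_pos mult_nonneg_nonneg)+
    then show "y \<in> Ti \<inter> Tj"
      using facet_eq_hyperplane_slice[OF convex_S Ti(1)] facet_eq_hyperplane_slice[OF convex_S Tj(1)]
        p Ti(2) Tj(2) yS by blast
  qed
  then have "aff_dim Tm \<le> aff_dim (Ti \<inter> Tj)" by (rule aff_dim_subset)
  moreover have "aff_dim (Ti \<inter> Tj) < aff_dim Ti"
  proof (rule face_of_aff_dim_lt)
    show "convex Ti" using facet_through_R(1)[OF Ti] .
    show "(Ti \<inter> Tj) face_of Ti"
      using face_of_Int[OF facet_of_imp_face_of[OF Ti(1)] facet_of_imp_face_of[OF Tj(1)]]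
        face_of_subset facet_of_imp_subset[OF Ti(1)] by blast
    show "Ti \<inter> Tj \<noteq> Ti"
    proof
      assume "Ti \<inter> Tj = Ti"
      then have "Ti face_of Tj"
        using face_of_subset[OF facet_of_imp_face_of[OF Ti(1)]] facet_of_imp_subset[OF Tj(1)] by blast
      then have "aff_dim Ti < aff_dim Tj"
        using face_of_aff_dim_lt[OF facet_through_R(1)[OF Tj]] ne by blast
      then show False using Ti(1) Tj(1) by (simp add: facet_of_def)
    qed
  qed
  ultimately show False using Ti(1) Tm(1) by (simp add: facet_of_def)
qed

lemma at_most_two_facets_through_R:
  assumes T1: "T1 facet_of S" "R \<subseteq> T1" and T2: "T2 facet_of S" "R \<subseteq> T2"
    and T3: "T3 facet_of S" "R \<subseteq> T3"
    and d12: "T1 \<noteq> T2" and d13: "T1 \<noteq> T3" and d23: "T2 \<noteq> T3"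
  shows False
proof -
  obtain p where p: "p \<in> R" using nonempty_R by blast
  obtain q where q: "q \<in> rel_interior S"
    using convex_S rel_interior_eq_empty face_of_imp_subset[OF face_R] p by blast
  define n1 where "n1 = facet_normal S T1"
  define u1 where "u1 = facet_normal T1 R"
  note U = normal_of_R_in_facet[OF T1, folded n1_def u1_def]
  have n1: "norm n1 = 1" using norm_facet_normal[OF convex_S T1(1)] by (simp add: n1_def)
  have in_plane: "facet_normal S T = (facet_normal S T \<bullet> n1) *\<^sub>R n1 + (facet_normal S T \<bullet> u1) *\<^sub>R u1
      \<and> norm (facet_normal S T) = 1 \<and> facet_normal S T \<bullet> (q - p) > 0"
    if "T facet_of S" "R \<subseteq> T" for T
    using normal_plane_decomposition[OF T1 facet_normal_in_diff_span[OF convex_S that(1)]]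
      facet_normal_orthogonal_R[OF that] norm_facet_normal[OF convex_S that(1)]
      facet_normal_pos_rel_interior[OF convex_S that(1) q] p that(2)
    by (auto simp: n1_def u1_def)
  obtain l m where lm: "l > 0" "m > 0"
    "facet_normal S T1 = l *\<^sub>R facet_normal S T2 + m *\<^sub>R facet_normal S T3 \<or>
     facet_normal S T2 = l *\<^sub>R facet_normal S T1 + m *\<^sub>R facet_normal S T3 \<or>
     facet_normal S T3 = l *\<^sub>R facet_normal S T1 + m *\<^sub>R facet_normal S T2"
  proof (rule unit_vectors_in_halfplane_pos_combination[OF n1 U(2,4)])
    show "facet_normal S T1 \<noteq> facet_normal S T2" using facet_normal_inj[OF T1 T2] d12 by blast
    show "facet_normal S T1 \<noteq> facet_normal S T3" using facet_normal_inj[OF T1 T3] d13 by blast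
    show "facet_normal S T2 \<noteq> facet_normal S T3" using facet_normal_inj[OF T2 T3] d23 by blast
  qed (use in_plane T1 T2 T3 in auto)
  then show False
    using no_facet_normal_pos_combination[OF T2 T3 T1 d23] no_facet_normal_pos_combination[OF T1 T3 T2 d13]
      no_facet_normal_pos_combination[OF T1 T2 T3 d12] by blast
qed

lemma two_facets_through_R:
  obtains T1 T2 where "T1 \<noteq> T2" "{T. T facet_of S \<and> R \<subseteq> T} = {T1, T2}"
proof -
  let ?F = "{T. T facet_of S \<and> R \<subseteq> T}"
  have "R \<noteq> S" using aff_dim_S by auto
  then have R: "R = \<Inter>?F" using face_of_polyhedron[OF polyhedron_S face_R nonempty_R] by blast
  have "?F \<noteq> {}"
  proof
    assume "?F = {}"
    then have "R = UNIV" using R by (metis Inter_empty)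
    then show False using aff_dim_S aff_dim_subset[of S R] by simp
  qed
  then obtain T1 where T1: "T1 \<in> ?F" by blast
  have "?F \<noteq> {T1}"
  proof
    assume "?F = {T1}"
    then have "R = T1" using R by simp
    then show False using T1 aff_dim_S by (simp add: facet_of_def)
  qed
  then obtain T2 where T2: "T2 \<in> ?F" "T2 \<noteq> T1" using T1 by blast
  have "?F = {T1, T2}"
    using at_most_two_facets_through_R T1 T2 by blast
  then show thesis using that T2(2) by blast
qed

lemma facet_normal_cancellation:
  assumes f: "linear f"
  shows "(\<Sum>T\<in>{T. T facet_of S \<and> R \<subseteq> T}.
      f (facet_normal S T) * (z \<bullet> facet_normal T R) - (z \<bullet> facet_normal S T) * f (facet_normal T R)) = 0"
proof -
  obtain T1 T2 where ne: "T1 \<noteq> T2" and eq: "{T. T facet_of S \<and> R \<subseteq> T} = {T1, T2}"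
    by (rule two_facets_through_R)
  have T1: "T1 facet_of S" "R \<subseteq> T1" and T2: "T2 facet_of S" "R \<subseteq> T2" using eq by blast+
  define n1 where "n1 = facet_normal S T1"
  define u1 where "u1 = facet_normal T1 R"
  define n2 where "n2 = facet_normal S T2"
  define u2 where "u2 = facet_normal T2 R"
  note U1 = normal_of_R_in_facet[OF T1, folded n1_def u1_def]
  note U2 = normal_of_R_in_facet[OF T2, folded n2_def u2_def]
  have n1: "norm n1 = 1" and n2: "norm n2 = 1"
    using norm_facet_normal[OF convex_S] T1(1) T2(1) by (auto simp: n1_def n2_def)
  define \<alpha> where "\<alpha> = n2 \<bullet> n1"
  define \<beta> where "\<beta> = n2 \<bullet> u1"
  define \<gamma> where "\<gamma> = u2 \<bullet> n1"
  define \<delta> where "\<delta> = u2 \<bullet> u1"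
  have n2d: "n2 = \<alpha> *\<^sub>R n1 + \<beta> *\<^sub>R u1"
    using normal_plane_decomposition[OF T1 facet_normal_in_diff_span[OF convex_S T2(1)]]
      facet_normal_orthogonal_R[OF T2] by (simp add: n1_def u1_def n2_def \<alpha>_def \<beta>_def)
  have u2d: "u2 = \<gamma> *\<^sub>R n1 + \<delta> *\<^sub>R u1"
    using normal_plane_decomposition[OF T1 U2(1) U2(3)] by (simp add: n1_def u1_def u2_def \<gamma>_def \<delta>_def)
  have "\<beta> > 0" using facet_normal_pos_other_facet[OF T1 T2 ne] by (simp add: \<beta>_def n2_def u1_def)
  moreover have "\<gamma> > 0"
    using facet_normal_pos_other_facet[OF T2 T1 ne[symmetric]] by (simp add: \<gamma>_def n1_def u2_def inner_commute)
  ultimately have det: "\<alpha> * \<delta> - \<beta> * \<gamma> = -1"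
    using orthonormal_basis_change_orientation[OF n1 U1(2,4) n2 U2(2,4) n2d u2d] by blast
  have fn2: "f n2 = \<alpha> * f n1 + \<beta> * f u1" and fu2: "f u2 = \<gamma> * f n1 + \<delta> * f u1"
    using n2d u2d linear_add[OF f] linear_scale[OF f] by simp_all
  have zn2: "z \<bullet> n2 = \<alpha> * (z \<bullet> n1) + \<beta> * (z \<bullet> u1)" and zu2: "z \<bullet> u2 = \<gamma> * (z \<bullet> n1) + \<delta> * (z \<bullet> u1)"
    using n2d u2d by (simp_all add: inner_add_right)
  have "(\<Sum>T\<in>{T1, T2}. f (facet_normal S T) * (z \<bullet> facet_normal T R) - (z \<bullet> facet_normal S T) * f (facet_normal T R))
     = (f n1 * (z \<bullet> u1) - (z \<bullet> n1) * f u1) + (f n2 * (z \<bullet> u2) - (z \<bullet> n2) * f u2)"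
    using ne by (simp add: n1_def n2_def u1_def u2_def)
  also have "\<dots> = (1 + (\<alpha> * \<delta> - \<beta> * \<gamma>)) * (f n1 * (z \<bullet> u1) - (z \<bullet> n1) * f u1)"
    unfolding fn2 fu2 zn2 zu2 by (simp add: algebra_simps)
  also have "\<dots> = 0" using det by simp
  finally show ?thesis using eq by simp
qed

end

section \<open>Euclidean polyhedral complexes\<close>

lemma eucl_complex_cell:
  assumes "eucl_complex iota P" "s \<in> P"
  shows "closed s \<and> inj_on iota s \<and> (\<exists>g. homeomorphism s (iota ` s) iota g) \<and> polyhedron (iota ` s)"
  using assms unfolding eucl_complex_def by (elim conjE) (rule bspec)

lemma
  assumes "eucl_complex iota P" "s \<in> P"
  shows eucl_complex_inj_on: "inj_on iota s"
    and eucl_complex_homeomorphism: "\<exists>g. homeomorphism s (iota ` s) iota g"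
    and eucl_complex_polyhedron: "polyhedron (iota ` s)"
    and eucl_complex_convex: "convex (iota ` s)"
  using eucl_complex_cell[OF assms] by (simp_all add: polyhedron_imp_convex)

lemma eucl_complex_face:
  "eucl_complex iota P \<Longrightarrow> s \<in> P \<Longrightarrow> is_face iota t s \<Longrightarrow> t \<noteq> {} \<Longrightarrow> t \<in> P"
  unfolding eucl_complex_def by blast

lemma eucl_complex_Int_face:
  "eucl_complex iota P \<Longrightarrow> s \<in> P \<Longrightarrow> s' \<in> P \<Longrightarrow> is_face iota (s \<inter> s') s"
  unfolding eucl_complex_def by blast

lemma eucl_complex_cover:
  assumes "eucl_complex iota P"
  shows "\<exists>s\<in>P. x \<in> s"
proof -
  have "\<Union>P = UNIV" using assms unfolding eucl_complex_def by (elim conjE)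
  then show ?thesis by blast
qed

lemma eucl_complex_locally_finite:
  assumes "eucl_complex iota P"
  obtains W where "open W" "x \<in> W" "finite {s\<in>P. s \<inter> W \<noteq> {}}"
proof -
  have "\<forall>x. \<exists>W. open W \<and> x \<in> W \<and> finite {s\<in>P. s \<inter> W \<noteq> {}}"
    using assms unfolding eucl_complex_def by (elim conjE)
  then show thesis using that by blast
qed

lemma finite_cells_containing:
  assumes "eucl_complex iota P" "x \<in> t"
  shows "finite {s\<in>P. t \<subseteq> s}"
proof -
  obtain W where "x \<in> W" "finite {s\<in>P. s \<inter> W \<noteq> {}}"
    using eucl_complex_locally_finite[OF assms(1)] by blast
  moreover have "{s\<in>P. t \<subseteq> s} \<subseteq> {s\<in>P. s \<inter> W \<noteq> {}}" using \<open>x \<in> W\<close> assms(2) by blast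
  ultimately show ?thesis using finite_subset by blast
qed

lemma complex_on_imp_eucl_complex: "complex_on iota P0 P \<Longrightarrow> eucl_complex iota P"
  by (simp add: complex_on_def)

lemma is_faceD:
  assumes "is_face iota t s"
  shows "t \<subseteq> s" "(iota ` t) face_of (iota ` s)"
  using assms by (auto simp: is_face_def)

lemma is_face_trans: "is_face iota a b \<Longrightarrow> is_face iota b c \<Longrightarrow> is_face iota a c"
  unfolding is_face_def using face_of_trans by blast

lemma restrD:
  assumes "s \<in> restr iota P V k"
  shows "s \<in> P" "s \<inter> V \<noteq> {}" "aff_dim (iota ` s) = k"
  using assms by (auto simp: restr_def cell_dim_def)

lemma restr_facet_of:
  assumes "\<sigma> \<in> restr iota P V k" "\<tau> \<in> restr iota P V (k - 1)" "is_face iota \<tau> \<sigma>"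
  shows "(iota ` \<tau>) facet_of (iota ` \<sigma>)"
  using restrD[OF assms(1)] restrD[OF assms(2)] is_faceD[OF assms(3)] by (auto simp: facet_of_def)

lemma lin_partD:
  assumes "pw_affine_on iota P V f" "s \<in> P" "s \<inter> V \<noteq> {}"
  shows "linear (lin_part iota V f s)" "x \<in> s \<inter> V \<Longrightarrow> f x = lin_part iota V f s (iota x)"
proof -
  have "\<exists>l. linear l \<and> (\<forall>x\<in>s \<inter> V. f x = l (iota x))"
    using assms unfolding pw_affine_on_def by blast
  then have "linear (lin_part iota V f s) \<and> (\<forall>x\<in>s \<inter> V. f x = lin_part iota V f s (iota x))"
    unfolding lin_part_def by (rule someI_ex)
  then show "linear (lin_part iota V f s)" "x \<in> s \<inter> V \<Longrightarrow> f x = lin_part iota V f s (iota x)"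
    by blast+
qed

lemma cell_Int_open_image:
  assumes "eucl_complex iota P" "s \<in> P" "open Q"
  obtains Q' where "open Q'" "iota ` (s \<inter> Q) = iota ` s \<inter> Q'"
proof -
  obtain g where "homeomorphism s (iota ` s) iota g"
    using eucl_complex_homeomorphism[OF assms(1,2)] by blast
  moreover have "openin (top_of_set s) (s \<inter> Q)" using assms(3) by (simp add: openin_open_Int)
  ultimately have "openin (top_of_set (iota ` s)) (iota ` (s \<inter> Q))"
    by (rule homeomorphism_imp_open_map)
  then show ?thesis using that unfolding openin_open by blast
qed

lemma rel_interior_point_in_open:
  assumes "eucl_complex iota P" "t \<in> P" "open Q" "t \<inter> Q \<noteq> {}"
  obtains x where "x \<in> t" "x \<in> Q" "iota x \<in> rel_interior (iota ` t)"
proof -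
  obtain Q' where Q': "open Q'" "iota ` (t \<inter> Q) = iota ` t \<inter> Q'"
    using cell_Int_open_image[OF assms(1-3)] by blast
  have "Q' \<inter> closure (iota ` t) \<noteq> {}" using Q'(2) assms(4) closure_subset by blast
  then have "Q' \<inter> rel_interior (iota ` t) \<noteq> {}"
    using open_Int_closure_eq_empty[OF Q'(1)]
      convex_closure_rel_interior[OF eucl_complex_convex[OF assms(1,2)]] by metis
  then obtain g where "g \<in> Q'" "g \<in> rel_interior (iota ` t)" by blast
  moreover from this have "g \<in> iota ` (t \<inter> Q)" using Q'(2) rel_interior_subset by blast
  ultimately show ?thesis using that by blast
qed

lemma affine_hull_cell_Int_open:
  assumes "eucl_complex iota P" "s \<in> P" "open Q" "s \<inter> Q \<noteq> {}"
  shows "affine hull (iota ` (s \<inter> Q)) = affine hull (iota ` s)"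
proof -
  obtain Q' where Q': "open Q'" "iota ` (s \<inter> Q) = iota ` s \<inter> Q'"
    using cell_Int_open_image[OF assms(1-3)] by blast
  have "iota ` s \<inter> Q' \<noteq> {}" using Q'(2) assms(4) by blast
  then show ?thesis
    using affine_hull_convex_Int_open[OF eucl_complex_convex[OF assms(1,2)] Q'(1)] Q'(2) by simp
qed

lemma linear_eq_on_diff_span_cell:
  assumes "eucl_complex iota P" "t \<in> P" "open V" "t \<inter> V \<noteq> {}"
    and l1: "linear l1" and l2: "linear l2" and eq: "\<And>x. x \<in> t \<inter> V \<Longrightarrow> l1 (iota x) = l2 (iota x)"
    and v: "v \<in> diff_span (iota ` t)"
  shows "l1 v = l2 v"
proof -
  let ?G = "iota ` (t \<inter> V)"
  have "subspace {y. l1 y - l2 y = 0}"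
    using linear_compose_sub[OF l1 l2] by (rule real_vector.linear_subspace_kernel)
  moreover have "?G \<subseteq> {y. l1 y - l2 y = 0}" using eq by auto
  ultimately have span: "span ?G \<subseteq> {y. l1 y = l2 y}" by (simp add: span_minimal)
  have "iota ` t \<subseteq> span ?G"
    using hull_subset[of "iota ` t" affine] affine_hull_cell_Int_open[OF assms(1-4)]
      affine_hull_subset_span[of ?G] by blast
  then have "diff_span (iota ` t) \<subseteq> span ?G"
    unfolding diff_span_def by (intro span_minimal) (auto intro: span_diff)
  then show ?thesis using span v by blast
qed

lemma lin_part_eq_on_face:
  assumes "eucl_complex iota P" "open V" "pw_affine_on iota P V f"
    and "\<sigma> \<in> P" "\<tau> \<in> P" "\<tau> \<subseteq> \<sigma>" "\<tau> \<inter> V \<noteq> {}" "v \<in> diff_span (iota ` \<tau>)"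
  shows "lin_part iota V f \<sigma> v = lin_part iota V f \<tau> v"
proof -
  have "\<sigma> \<inter> V \<noteq> {}" using assms(6,7) by blast
  note L\<sigma> = lin_partD[OF assms(3,4) this] and L\<tau> = lin_partD[OF assms(3,5,7)]
  have "lin_part iota V f \<sigma> (iota x) = lin_part iota V f \<tau> (iota x)" if "x \<in> \<tau> \<inter> V" for x
    using L\<sigma>(2)[of x] L\<tau>(2)[of x] that assms(6) by auto
  then show ?thesis
    by (rule linear_eq_on_diff_span_cell[OF assms(1,5,2,7) L\<sigma>(1) L\<tau>(1) _ assms(8)])
qed

section \<open>Balancing of products with piecewise affine functions\<close>

lemma sum_intermediate_faces_eq_sum_facets:
  assumes EC: "eucl_complex iota P" and \<sigma>: "\<sigma> \<in> restr iota P V k"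
    and \<rho>: "\<rho> \<in> restr iota P V (k - 2)" and \<rho>\<sigma>: "is_face iota \<rho> \<sigma>"
  shows "(\<Sum>\<tau>\<in>{\<tau> \<in> restr iota P V (k - 1). is_face iota \<rho> \<tau> \<and> is_face iota \<tau> \<sigma>}. h (iota ` \<tau>))
       = (\<Sum>T\<in>{T. T facet_of (iota ` \<sigma>) \<and> iota ` \<rho> \<subseteq> T}. h T)"
proof -
  let ?A = "{\<tau> \<in> restr iota P V (k - 1). is_face iota \<rho> \<tau> \<and> is_face iota \<tau> \<sigma>}"
  let ?F = "{T. T facet_of (iota ` \<sigma>) \<and> iota ` \<rho> \<subseteq> T}"
  note S = restrD[OF \<sigma>] and R = restrD[OF \<rho>]
  have "inj_on ((`) iota) ?A"
  proof (rule inj_onI)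
    fix a b assume "a \<in> ?A" "b \<in> ?A" "iota ` a = iota ` b"
    then show "a = b"
      using inj_on_image_eq_iff[OF eucl_complex_inj_on[OF EC S(1)]] is_faceD(1)
      by (metis (no_types, lifting) mem_Collect_eq)
  qed
  moreover have "(`) iota ` ?A = ?F"
  proof
    show "(`) iota ` ?A \<subseteq> ?F"
      using restr_facet_of[OF \<sigma>] by (auto dest: is_faceD(1))
    show "?F \<subseteq> (`) iota ` ?A"
    proof
      fix T assume T: "T \<in> ?F"
      define \<tau> where "\<tau> = {x \<in> \<sigma>. iota x \<in> T}"
      have T\<sigma>: "T \<subseteq> iota ` \<sigma>" using T facet_of_imp_subset by blast
      then have \<tau>T: "iota ` \<tau> = T" by (auto simp: \<tau>_def)
      have \<rho>\<tau>: "\<rho> \<subseteq> \<tau>" using is_faceD(1)[OF \<rho>\<sigma>] T by (auto simp: \<tau>_def)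
      have \<tau>\<sigma>: "is_face iota \<tau> \<sigma>" using T \<tau>T by (auto simp: is_face_def \<tau>_def facet_of_def)
      have "\<tau> \<in> P" using eucl_complex_face[OF EC S(1) \<tau>\<sigma>] \<rho>\<tau> R(2) by blast
      moreover have "\<tau> \<inter> V \<noteq> {}" using \<rho>\<tau> R(2) by blast
      moreover have "cell_dim iota \<tau> = k - 1" using T \<tau>T S(3) by (simp add: cell_dim_def facet_of_def)
      moreover have "is_face iota \<rho> \<tau>"
        using face_of_subset[OF is_faceD(2)[OF \<rho>\<sigma>]] T T\<sigma> \<rho>\<tau> \<tau>T by (auto simp: is_face_def)
      ultimately have "\<tau> \<in> ?A" using \<tau>\<sigma> by (simp add: restr_def)
      then show "T \<in> (`) iota ` ?A" using \<tau>T by blast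
    qed
  qed
  ultimately show ?thesis using sum.reindex[of "(`) iota" ?A h] by simp
qed

lemma sum_intermediate_faces_cancel:
  assumes EC: "eucl_complex iota P" and \<sigma>: "\<sigma> \<in> restr iota P V k"
    and \<rho>: "\<rho> \<in> restr iota P V (k - 2)" and \<rho>\<sigma>: "is_face iota \<rho> \<sigma>" and L: "linear L"
  shows "(\<Sum>\<tau>\<in>{\<tau> \<in> restr iota P V (k - 1). is_face iota \<rho> \<tau> \<and> is_face iota \<tau> \<sigma>}.
      L (normal_vec iota \<sigma> \<tau>) * (z \<bullet> normal_vec iota \<tau> \<rho>)
        - (z \<bullet> normal_vec iota \<sigma> \<tau>) * L (normal_vec iota \<tau> \<rho>)) = 0"
proof -
  note S = restrD[OF \<sigma>] and R = restrD[OF \<rho>]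
  interpret codim2_face "iota ` \<sigma>" "iota ` \<rho>"
    using eucl_complex_polyhedron[OF EC S(1)] is_faceD(2)[OF \<rho>\<sigma>] R(2) S(3) R(3)
    by unfold_locales auto
  define h where "h T = L (facet_normal (iota ` \<sigma>) T) * (z \<bullet> facet_normal T (iota ` \<rho>))
    - (z \<bullet> facet_normal (iota ` \<sigma>) T) * L (facet_normal T (iota ` \<rho>))" for T
  show ?thesis
    using sum_intermediate_faces_eq_sum_facets[OF EC \<sigma> \<rho> \<rho>\<sigma>, of h] facet_normal_cancellation[OF L]
    by (simp add: h_def normal_vec_eq_facet_normal)
qed

lemma sum_star_balanced:
  assumes EC: "eucl_complex iota P" and V: "open V" and pw: "pw_affine_on iota P V f"
    and mk: "minkowski iota P V k c" and \<tau>: "\<tau> \<in> restr iota P V (k - 1)"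
    and u: "u \<in> diff_span (iota ` \<tau>)"
  shows "(\<Sum>\<sigma>\<in>{\<sigma> \<in> restr iota P V k. is_face iota \<tau> \<sigma>}.
      c \<sigma> * ((z \<bullet> normal_vec iota \<sigma> \<tau>) * lin_part iota V f \<sigma> u)) = 0"
proof -
  let ?St = "{\<sigma> \<in> restr iota P V k. is_face iota \<tau> \<sigma>}"
  note T = restrD[OF \<tau>]
  have "lin_part iota V f \<sigma> u = lin_part iota V f \<tau> u" if "\<sigma> \<in> ?St" for \<sigma>
    using that lin_part_eq_on_face[OF EC V pw _ T(1) _ T(2) u]
    by (auto dest: restrD(1) is_faceD(1))
  then have "(\<Sum>\<sigma>\<in>?St. c \<sigma> * ((z \<bullet> normal_vec iota \<sigma> \<tau>) * lin_part iota V f \<sigma> u))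
      = lin_part iota V f \<tau> u * (z \<bullet> (\<Sum>\<sigma>\<in>?St. c \<sigma> *\<^sub>R normal_vec iota \<sigma> \<tau>))"
    by (simp add: sum_distrib_left inner_sum_right mult_ac)
  also have "(\<Sum>\<sigma>\<in>?St. c \<sigma> *\<^sub>R normal_vec iota \<sigma> \<tau>) = 0"
    using mk \<tau> unfolding minkowski_def by blast
  finally show ?thesis by simp
qed

lemma sum_chains_cancel:
  assumes EC: "eucl_complex iota P" and pw: "pw_affine_on iota P V f"
    and \<rho>: "\<rho> \<in> restr iota P V (k - 2)"
  shows "(\<Sum>\<tau>\<in>{\<tau> \<in> restr iota P V (k - 1). is_face iota \<rho> \<tau>}.
      \<Sum>\<sigma>\<in>{\<sigma> \<in> restr iota P V k. is_face iota \<tau> \<sigma>}.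
        c \<sigma> * (lin_part iota V f \<sigma> (normal_vec iota \<sigma> \<tau>) * (z \<bullet> normal_vec iota \<tau> \<rho>)
          - (z \<bullet> normal_vec iota \<sigma> \<tau>) * lin_part iota V f \<sigma> (normal_vec iota \<tau> \<rho>))) = 0"
    (is "(\<Sum>\<tau>\<in>?A. \<Sum>\<sigma>\<in>?St \<tau>. c \<sigma> * ?D \<sigma> \<tau>) = 0")
proof -
  define B where "B = {\<sigma> \<in> restr iota P V k. is_face iota \<rho> \<sigma>}"
  obtain x0 where x0: "x0 \<in> \<rho>" using restrD(2)[OF \<rho>] by blast
  have finA: "finite ?A" and finB: "finite B"
    using finite_cells_containing[OF EC x0]
    by (auto simp: B_def restr_def is_face_def elim: finite_subset[rotated])
  have "(\<Sum>\<tau>\<in>?A. \<Sum>\<sigma>\<in>?St \<tau>. c \<sigma> * ?D \<sigma> \<tau>) = (\<Sum>\<tau>\<in>?A. \<Sum>\<sigma>\<in>{\<sigma> \<in> B. is_face iota \<tau> \<sigma>}. c \<sigma> * ?D \<sigma> \<tau>)"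
    using is_face_trans by (intro sum.cong refl) (auto simp: B_def)
  also have "\<dots> = (\<Sum>\<sigma>\<in>B. c \<sigma> * (\<Sum>\<tau>\<in>{\<tau> \<in> ?A. is_face iota \<tau> \<sigma>}. ?D \<sigma> \<tau>))"
    by (simp add: sum.swap_restrict[OF finA finB] sum_distrib_left)
  also have "\<dots> = 0"
  proof (intro sum.neutral ballI)
    fix \<sigma> assume "\<sigma> \<in> B"
    then have \<sigma>: "\<sigma> \<in> restr iota P V k" "is_face iota \<rho> \<sigma>" by (auto simp: B_def)
    have "{\<tau> \<in> ?A. is_face iota \<tau> \<sigma>}
        = {\<tau> \<in> restr iota P V (k - 1). is_face iota \<rho> \<tau> \<and> is_face iota \<tau> \<sigma>}"
      by auto
    then show "c \<sigma> * (\<Sum>\<tau>\<in>{\<tau> \<in> ?A. is_face iota \<tau> \<sigma>}. ?D \<sigma> \<tau>) = 0"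
      using sum_intermediate_faces_cancel[OF EC \<sigma>(1) \<rho> \<sigma>(2) lin_partD(1)[OF pw restrD(1,2)[OF \<sigma>(1)]]]
      by simp
  qed
  finally show ?thesis .
qed

text \<open>With v the balancing sum of f \<cdot> c at \<rho>, the square v \<bullet> v is a double sum over chains
  \<rho> \<prec> \<tau> \<prec> \<sigma>. Adding terms that vanish because c is balanced at each \<tau> yields the double sum
  of sum_chains_cancel, so v = 0.\<close>

lemma minkowski_mult_weight:
  assumes EC: "eucl_complex iota P" and V: "open V" and pw: "pw_affine_on iota P V f"
    and mk: "minkowski iota P V k c"
  shows "minkowski iota P V (k - 1) (mult_weight iota P V k f c)"
  unfolding minkowski_def
proof
  fix \<rho> assume \<rho>1: "\<rho> \<in> restr iota P V (k - 1 - 1)"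
  then have \<rho>: "\<rho> \<in> restr iota P V (k - 2)" by (simp add: algebra_simps)
  define A where "A = {\<tau> \<in> restr iota P V (k - 1). is_face iota \<rho> \<tau>}"
  define St where "St \<tau> = {\<sigma> \<in> restr iota P V k. is_face iota \<tau> \<sigma>}" for \<tau>
  define L where "L = lin_part iota V f"
  define n where "n \<sigma> \<tau> = normal_vec iota \<sigma> \<tau>" for \<sigma> \<tau>
  define u where "u \<tau> = normal_vec iota \<tau> \<rho>" for \<tau>
  define D where "D z \<sigma> \<tau> = L \<sigma> (n \<sigma> \<tau>) * (z \<bullet> u \<tau>) - (z \<bullet> n \<sigma> \<tau>) * L \<sigma> (u \<tau>)" for z \<sigma> \<tau>
  define v where "v = (\<Sum>\<tau>\<in>A. mult_weight iota P V k f c \<tau> *\<^sub>R u \<tau>)"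
  have balanced: "(\<Sum>\<sigma>\<in>St \<tau>. c \<sigma> * ((z \<bullet> n \<sigma> \<tau>) * L \<sigma> (u \<tau>))) = 0" if "\<tau> \<in> A" for \<tau> z
  proof -
    have \<tau>: "\<tau> \<in> restr iota P V (k - 1)" "is_face iota \<rho> \<tau>" using that by (auto simp: A_def)
    have "u \<tau> \<in> diff_span (iota ` \<tau>)"
      using facet_normal_in_diff_span[OF eucl_complex_convex[OF EC restrD(1)[OF \<tau>(1)]]
          restr_facet_of[OF \<tau>(1) \<rho>1 \<tau>(2)]]
      by (simp add: u_def normal_vec_eq_facet_normal)
    then show ?thesis
      using sum_star_balanced[OF EC V pw mk \<tau>(1)] by (simp add: St_def L_def n_def)
  qed
  have cancel: "(\<Sum>\<tau>\<in>A. \<Sum>\<sigma>\<in>St \<tau>. c \<sigma> * D z \<sigma> \<tau>) = 0" for z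
    using sum_chains_cancel[OF EC pw \<rho>] by (simp add: A_def St_def D_def L_def n_def u_def)
  have "v \<bullet> v = (\<Sum>\<tau>\<in>A. mult_weight iota P V k f c \<tau> * (v \<bullet> u \<tau>))"
    by (subst (2) v_def) (simp add: inner_sum_right)
  also have "\<dots> = - (\<Sum>\<tau>\<in>A. \<Sum>\<sigma>\<in>St \<tau>. c \<sigma> * (L \<sigma> (n \<sigma> \<tau>) * (v \<bullet> u \<tau>)))"
    by (simp add: mult_weight_def St_def L_def n_def sum_negf sum_distrib_left mult_ac)
  also have "\<dots> = - (\<Sum>\<tau>\<in>A. \<Sum>\<sigma>\<in>St \<tau>. c \<sigma> * D v \<sigma> \<tau>)
      - (\<Sum>\<tau>\<in>A. \<Sum>\<sigma>\<in>St \<tau>. c \<sigma> * ((v \<bullet> n \<sigma> \<tau>) * L \<sigma> (u \<tau>)))"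
    by (simp add: D_def sum.distrib[symmetric] algebra_simps)
  also have "\<dots> = 0" using cancel balanced by simp
  finally have "v = 0" by simp
  then show "(\<Sum>\<tau>\<in>{\<tau> \<in> restr iota P V (k - 1). is_face iota \<rho> \<tau>}.
      mult_weight iota P V k f c \<tau> *\<^sub>R normal_vec iota \<tau> \<rho>) = 0"
    by (simp add: v_def A_def u_def)
qed

section \<open>Positivity of cycles\<close>

lemma restr_cell_unique:
  assumes EC: "eucl_complex iota P" and s1: "s1 \<in> restr iota P V k" and s2: "s2 \<in> restr iota P V k"
    and F: "F \<subseteq> s1" "F \<subseteq> s2" "aff_dim (iota ` F) = k"
  shows "s1 = s2"
proof -
  have "a \<subseteq> b" if a: "a \<in> restr iota P V k" and b: "b \<in> restr iota P V k" and "F \<subseteq> a" "F \<subseteq> b"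
    for a b
  proof (rule ccontr)
    assume "\<not> a \<subseteq> b"
    note A = restrD[OF a] and B = restrD[OF b]
    have "iota ` (a \<inter> b) \<noteq> iota ` a"
      using inj_on_image_eq_iff[OF eucl_complex_inj_on[OF EC A(1)], of "a \<inter> b" a] \<open>\<not> a \<subseteq> b\<close> by blast
    then have "aff_dim (iota ` (a \<inter> b)) < aff_dim (iota ` a)"
      using face_of_aff_dim_lt[OF eucl_complex_convex[OF EC A(1)]]
        is_faceD(2)[OF eucl_complex_Int_face[OF EC A(1) B(1)]] by blast
    moreover have "aff_dim (iota ` F) \<le> aff_dim (iota ` (a \<inter> b))"
      using that by (intro aff_dim_subset image_mono) blast
    ultimately show False using A(3) F(3) by simp
  qed
  then show ?thesis using s1 s2 F(1,2) by blast
qed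

lemma pullback_eq:
  assumes EC: "eucl_complex iota P" and s: "s \<in> restr iota P V k"
    and F: "F \<subseteq> s" "aff_dim (iota ` F) = k"
  shows "pullback iota P V k c F = c s"
proof -
  have "(THE s'. s' \<in> restr iota P V k \<and> F \<subseteq> s') = s"
  proof (rule the_equality)
    show "s \<in> restr iota P V k \<and> F \<subseteq> s" using s F(1) by simp
    show "s' = s" if "s' \<in> restr iota P V k \<and> F \<subseteq> s'" for s'
      using restr_cell_unique[OF EC _ s _ F] that by blast
  qed
  then show ?thesis using s F(1) by (auto simp: pullback_def)
qed

lemma pullback_nonneg:
  assumes EC: "eucl_complex iota P" and pos: "positive_weight iota P V k c"
    and F: "aff_dim (iota ` F) = k"
  shows "pullback iota P V k c F \<ge> 0"
proof (cases "\<exists>s\<in>restr iota P V k. F \<subseteq> s")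
  case True
  then obtain s where "s \<in> restr iota P V k" "F \<subseteq> s" by blast
  then show ?thesis using pullback_eq[OF EC _ _ F] pos by (simp add: positive_weight_def)
next
  case False
  then show ?thesis by (simp add: pullback_def)
qed

lemma finite_lower_dim_not_cover:
  fixes S :: "'a::euclidean_space set"
  assumes "finite CC" "openin (top_of_set (affine hull S)) G" "G \<noteq> {}"
    and "\<And>C. C \<in> CC \<Longrightarrow> aff_dim C < aff_dim S"
  shows "\<exists>g\<in>G. g \<notin> \<Union>CC"
  using assms
proof (induction CC arbitrary: G rule: finite_induct)
  case empty
  then show ?case by auto
next
  case (insert C CC)
  let ?G = "G \<inter> - (affine hull C)"
  have "open (- (affine hull C))" by (rule open_Compl) (rule closed_affine_hull)
  then have "openin (top_of_set (affine hull S)) ?G" by (rule openin_Int_open[OF insert.prems(1)])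
  moreover have "?G \<noteq> {}"
  proof
    assume "?G = {}"
    then have "G \<subseteq> affine hull C" by blast
    then have "affine hull G \<subseteq> affine hull C" by (simp add: hull_minimal)
    then have "aff_dim S \<le> aff_dim C"
      using affine_hull_openin[OF insert.prems(1,2)] by (metis aff_dim_affine_hull aff_dim_subset)
    then show False using insert.prems(3) by force
  qed
  ultimately obtain g where "g \<in> ?G" "g \<notin> \<Union>CC" using insert.IH insert.prems(3) by blast
  then show ?case using hull_subset[of C affine] by blast
qed

lemma subdivision_Int_is_face:
  assumes EC': "eucl_complex iota P'" and EC3: "eucl_complex iota P3"
    and s: "s \<in> P3" and s': "s' \<in> P'" "s \<subseteq> s'" and \<sigma>: "\<sigma> \<in> P'"
  shows "is_face iota (s \<inter> \<sigma>) s"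
proof -
  have "(iota ` (s' \<inter> \<sigma>) \<inter> iota ` s) face_of (iota ` s' \<inter> iota ` s)"
    using face_of_slice[OF is_faceD(2)[OF eucl_complex_Int_face[OF EC' s'(1) \<sigma>]]
        eucl_complex_convex[OF EC3 s]] .
  moreover have "iota ` (s' \<inter> \<sigma>) \<inter> iota ` s = iota ` (s \<inter> \<sigma>)"
  proof -
    have "s' \<inter> \<sigma> \<subseteq> s'" by blast
    from inj_on_image_Int[OF eucl_complex_inj_on[OF EC' s'(1)] this s'(2)]
    have "iota ` (s' \<inter> \<sigma>) \<inter> iota ` s = iota ` ((s' \<inter> \<sigma>) \<inter> s)" by simp
    also have "(s' \<inter> \<sigma>) \<inter> s = s \<inter> \<sigma>" using s'(2) by blast
    finally show ?thesis .
  qed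
  moreover have "iota ` s' \<inter> iota ` s = iota ` s" by (rule Int_absorb1[OF image_mono[OF s'(2)]])
  ultimately have "(iota ` (s \<inter> \<sigma>)) face_of (iota ` s)" by metis
  then show ?thesis by (simp add: is_face_def)
qed

lemma generic_point_in_cell:
  assumes EC: "eucl_complex iota P" and \<sigma>: "\<sigma> \<in> P" and Q: "open Q" "\<sigma> \<inter> Q \<noteq> {}"
    and CC: "finite CC" "\<And>C. C \<in> CC \<Longrightarrow> aff_dim C < aff_dim (iota ` \<sigma>)"
  obtains y where "y \<in> \<sigma>" "y \<in> Q" "iota y \<notin> \<Union>CC"
proof -
  obtain Q' where Q': "open Q'" "iota ` (\<sigma> \<inter> Q) = iota ` \<sigma> \<inter> Q'"
    using cell_Int_open_image[OF EC \<sigma> Q(1)] by blast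
  define G where "G = rel_interior (iota ` \<sigma>) \<inter> Q'"
  have G: "openin (top_of_set (affine hull (iota ` \<sigma>))) G"
    unfolding G_def by (rule openin_Int_open[OF openin_rel_interior Q'(1)])
  have "G \<noteq> {}"
    using rel_interior_point_in_open[OF EC \<sigma> Q] Q'(2) by (auto simp: G_def)
  then obtain g where g: "g \<in> G" "g \<notin> \<Union>CC" using finite_lower_dim_not_cover[OF CC(1) G] CC(2) by blast
  then have "g \<in> iota ` \<sigma> \<inter> Q'" using rel_interior_subset by (auto simp: G_def)
  then have "g \<in> iota ` (\<sigma> \<inter> Q)" using Q'(2) by simp
  then show thesis using that g(2) by blast
qed

text \<open>A point of \<sigma> avoiding the lower-dimensional traces s \<inter> \<sigma> of the finitely many nearby
  cells s of the subdivision lies in a cell s with dim (s \<inter> \<sigma>) = dim \<sigma>.\<close>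

lemma subdivision_has_subcell:
  assumes EC': "eucl_complex iota P'" and EC3: "eucl_complex iota P3" and sd: "subdivides P3 P'"
    and V: "open V" and \<sigma>: "\<sigma> \<in> restr iota P' V k"
  obtains E where "E \<in> restr iota P3 V k" "E \<subseteq> \<sigma>"
proof -
  note S = restrD[OF \<sigma>]
  obtain x0 where x0: "x0 \<in> \<sigma>" "x0 \<in> V" using S(2) by blast
  obtain W where W: "open W" "x0 \<in> W" "finite {s\<in>P3. s \<inter> W \<noteq> {}}"
    using eucl_complex_locally_finite[OF EC3] by blast
  define Q where "Q = W \<inter> V"
  have Q: "open Q" "\<sigma> \<inter> Q \<noteq> {}" using W V x0 by (auto simp: Q_def)
  define CC where
    "CC = {iota ` (s \<inter> \<sigma>) | s. s \<in> P3 \<and> s \<inter> W \<noteq> {} \<and> aff_dim (iota ` (s \<inter> \<sigma>)) < k}"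
  have "CC \<subseteq> (\<lambda>s. iota ` (s \<inter> \<sigma>)) ` {s\<in>P3. s \<inter> W \<noteq> {}}" unfolding CC_def by blast
  then have "finite CC" using finite_subset finite_imageI[OF W(3)] by blast
  moreover have "\<And>C. C \<in> CC \<Longrightarrow> aff_dim C < aff_dim (iota ` \<sigma>)" using S(3) unfolding CC_def by auto
  ultimately obtain y where y: "y \<in> \<sigma>" "y \<in> Q" "iota y \<notin> \<Union>CC"
    using generic_point_in_cell[OF EC' S(1) Q] by blast
  obtain s where s: "s \<in> P3" "y \<in> s" using eucl_complex_cover[OF EC3] by blast
  obtain s' where s': "s' \<in> P'" "s \<subseteq> s'" using sd s(1) by (auto simp: subdivides_def)
  have face: "is_face iota (s \<inter> \<sigma>) s" using subdivision_Int_is_face[OF EC' EC3 s(1) s' S(1)] .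
  have "aff_dim (iota ` (s \<inter> \<sigma>)) \<ge> k"
  proof (rule ccontr)
    assume "\<not> ?thesis"
    moreover have "s \<inter> W \<noteq> {}" using s(2) y(2) by (auto simp: Q_def)
    ultimately have "iota ` (s \<inter> \<sigma>) \<in> CC" using s(1) unfolding CC_def by auto
    moreover have "iota y \<in> iota ` (s \<inter> \<sigma>)" using s(2) y(1) by blast
    ultimately show False using y(3) by blast
  qed
  moreover have "aff_dim (iota ` (s \<inter> \<sigma>)) \<le> k"
    using aff_dim_subset[OF image_mono[of "s \<inter> \<sigma>" \<sigma> iota]] S(3) by simp
  moreover have "s \<inter> \<sigma> \<in> P3" using eucl_complex_face[OF EC3 s(1) face] s(2) y(1) by blast
  moreover have "(s \<inter> \<sigma>) \<inter> V \<noteq> {}" using s(2) y by (auto simp: Q_def)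
  ultimately have "s \<inter> \<sigma> \<in> restr iota P3 V k" by (simp add: restr_def cell_dim_def)
  then show thesis using that by blast
qed

lemma same_cycle_nonneg:
  assumes EC: "eucl_complex iota P" and EC': "eucl_complex iota P'" and V: "open V"
    and pos: "positive_weight iota P V k c" and sc: "same_cycle iota P0 V k P c P' c'"
    and \<sigma>: "\<sigma> \<in> restr iota P' V k"
  shows "c' \<sigma> \<ge> 0"
proof -
  obtain P3 where P3: "complex_on iota P0 P3" "subdivides P3 P'"
    "\<forall>s\<in>restr iota P3 V k. pullback iota P V k c s = pullback iota P' V k c' s"
    using sc unfolding same_cycle_def by blast
  obtain E where E: "E \<in> restr iota P3 V k" "E \<subseteq> \<sigma>"
    using subdivision_has_subcell[OF EC' complex_on_imp_eucl_complex[OF P3(1)] P3(2) V \<sigma>] .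
  have dim: "aff_dim (iota ` E) = k" using restrD(3)[OF E(1)] .
  have "c' \<sigma> = pullback iota P' V k c' E" using pullback_eq[OF EC' \<sigma> E(2) dim] by simp
  also have "\<dots> = pullback iota P V k c E" using P3(3) E(1) by simp
  also have "\<dots> \<ge> 0" using pullback_nonneg[OF EC pos dim] .
  finally show ?thesis .
qed

lemma positive_cycle_self:
  assumes "complex_on iota P0 P" "minkowski iota P U k c" "positive_weight iota P U k c"
  shows "positive_cycle iota P0 U k P c"
proof -
  have "subdivides P P" by (auto simp: subdivides_def)
  then have "same_cycle iota P0 U k P c P c" using assms(1) unfolding same_cycle_def by blast
  then show ?thesis using assms unfolding positive_cycle_def by blast
qed

section \<open>Concavity\<close>

text \<open>Jensen's inequality on the hypograph of f', applied at the barycenter p of the points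
  p + \<epsilon> n i with weights c i.\<close>

lemma concave_balanced_slopes_nonpos:
  fixes f' :: "'a::real_vector \<Rightarrow> ereal"
  assumes K: "convex {(y, z::real). y \<in> H \<and> ereal z \<le> f' y}"
    and I: "finite I" and c: "\<And>i. i \<in> I \<Longrightarrow> c i \<ge> 0" and bal: "(\<Sum>i\<in>I. c i *\<^sub>R n i) = 0"
    and p: "f' p = ereal y0" and \<epsilon>: "\<epsilon> > 0"
    and pts: "\<And>i. i \<in> I \<Longrightarrow> p + \<epsilon> *\<^sub>R n i \<in> H \<and> ereal (y0 + \<epsilon> * d i) \<le> f' (p + \<epsilon> *\<^sub>R n i)"
  shows "(\<Sum>i\<in>I. c i * d i) \<le> 0"
proof (cases "sum c I = 0")
  case True
  then have "\<forall>i\<in>I. c i = 0" using sum_nonneg_eq_0_iff[OF I] c by blast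
  then show ?thesis by simp
next
  case False
  define C where "C = sum c I"
  have C: "C > 0" using False sum_nonneg[of I c] c by (simp add: C_def less_le)
  define a where "a i = c i / C" for i
  have a1: "(\<Sum>i\<in>I. a i) = 1" using C by (simp add: a_def C_def flip: sum_divide_distrib)
  have a0: "a i \<ge> 0" if "i \<in> I" for i using c[OF that] C by (simp add: a_def)
  have "(\<Sum>i\<in>I. a i *\<^sub>R (p + \<epsilon> *\<^sub>R n i, y0 + \<epsilon> * d i)) \<in> {(y, z). y \<in> H \<and> ereal z \<le> f' y}"
    by (rule convex_sum[OF I K a1 a0]) (use pts in auto)
  moreover have "(\<Sum>i\<in>I. a i *\<^sub>R (p + \<epsilon> *\<^sub>R n i, y0 + \<epsilon> * d i))
      = (\<Sum>i\<in>I. a i *\<^sub>R (p + \<epsilon> *\<^sub>R n i), \<Sum>i\<in>I. a i * (y0 + \<epsilon> * d i))"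
    by (simp add: prod_eq_iff fst_sum snd_sum)
  moreover have "(\<Sum>i\<in>I. a i *\<^sub>R (p + \<epsilon> *\<^sub>R n i))
      = (\<Sum>i\<in>I. a i) *\<^sub>R p + (\<epsilon> / C) *\<^sub>R (\<Sum>i\<in>I. c i *\<^sub>R n i)"
    by (simp add: a_def scaleR_add_right sum.distrib scaleR_sum_right mult.commute flip: scaleR_sum_left)
  moreover have "(\<Sum>i\<in>I. a i * (y0 + \<epsilon> * d i)) = (\<Sum>i\<in>I. a i) * y0 + (\<epsilon> / C) * (\<Sum>i\<in>I. c i * d i)"
    by (simp add: a_def distrib_left sum.distrib sum_distrib_left sum_distrib_right mult_ac)
  ultimately have "y0 + (\<epsilon> / C) * (\<Sum>i\<in>I. c i * d i) \<le> y0"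
    using a1 bal p by simp
  then show ?thesis using \<epsilon> C by (simp add: divide_le_0_iff mult_le_0_iff)
qed

lemma eventually_normal_step_in_cell:
  assumes EC: "eucl_complex iota P" and Q: "open Q"
    and \<sigma>: "\<sigma> \<in> restr iota P V k" and \<tau>: "\<tau> \<in> restr iota P V (k - 1)" and \<tau>\<sigma>: "is_face iota \<tau> \<sigma>"
    and x: "x \<in> \<tau>" "x \<in> Q" "iota x \<in> rel_interior (iota ` \<tau>)"
  shows "\<forall>\<^sub>F t in at_right 0. iota x + t *\<^sub>R normal_vec iota \<sigma> \<tau> \<in> iota ` (\<sigma> \<inter> Q)"
proof -
  define n where "n = normal_vec iota \<sigma> \<tau>"
  note facet = eucl_complex_convex[OF EC restrD(1)[OF \<sigma>]] restr_facet_of[OF \<sigma> \<tau> \<tau>\<sigma>]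
  obtain \<delta> where \<delta>: "\<delta> > 0" "\<And>t. 0 \<le> t \<Longrightarrow> t \<le> \<delta> \<Longrightarrow> iota x + t *\<^sub>R n \<in> iota ` \<sigma>"
    using facet_normal_points_inward[OF facet x(3)] by (auto simp: n_def normal_vec_eq_facet_normal)
  have n: "norm n = 1" using norm_facet_normal[OF facet] by (simp add: n_def normal_vec_eq_facet_normal)
  obtain Q' where Q': "open Q'" "iota ` (\<sigma> \<inter> Q) = iota ` \<sigma> \<inter> Q'"
    using cell_Int_open_image[OF EC restrD(1)[OF \<sigma>] Q] by blast
  have "iota x \<in> Q'" using Q'(2) x(1,2) is_faceD(1)[OF \<tau>\<sigma>] by blast
  then obtain r where r: "r > 0" "ball (iota x) r \<subseteq> Q'" using Q'(1) open_contains_ball by blast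
  have "iota x + t *\<^sub>R n \<in> iota ` (\<sigma> \<inter> Q)" if "0 < t" "t < min \<delta> r" for t
  proof -
    have "iota x + t *\<^sub>R n \<in> ball (iota x) r" using that n by (simp add: dist_norm)
    then show ?thesis using Q'(2) r(2) \<delta>(2)[of t] that by auto
  qed
  then show ?thesis
    unfolding eventually_at_right_field n_def using \<delta>(1) r(1) by (intro exI[of _ "min \<delta> r"]) auto
qed

lemma normal_steps_into_cells:
  assumes EC: "eucl_complex iota P" and Q: "open Q" and \<tau>: "\<tau> \<in> restr iota P V (k - 1)"
    and x: "x \<in> \<tau>" "x \<in> Q" "iota x \<in> rel_interior (iota ` \<tau>)"
  obtains \<epsilon> q where "\<epsilon> > 0" "\<And>\<sigma>. \<sigma> \<in> restr iota P V k \<Longrightarrow> is_face iota \<tau> \<sigma> \<Longrightarrow>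
    q \<sigma> \<in> \<sigma> \<inter> Q \<and> iota (q \<sigma>) = iota x + \<epsilon> *\<^sub>R normal_vec iota \<sigma> \<tau>"
proof -
  define Sg where "Sg = {\<sigma> \<in> restr iota P V k. is_face iota \<tau> \<sigma>}"
  have "finite Sg"
    using finite_cells_containing[OF EC x(1)] by (auto simp: Sg_def restr_def is_face_def elim: finite_subset[rotated])
  moreover have "\<forall>\<sigma>\<in>Sg. \<forall>\<^sub>F t in at_right 0. iota x + t *\<^sub>R normal_vec iota \<sigma> \<tau> \<in> iota ` (\<sigma> \<inter> Q)"
    using eventually_normal_step_in_cell[OF EC Q _ \<tau> _ x] by (auto simp: Sg_def)
  ultimately have "\<forall>\<^sub>F t in at_right 0. \<forall>\<sigma>\<in>Sg. iota x + t *\<^sub>R normal_vec iota \<sigma> \<tau> \<in> iota ` (\<sigma> \<inter> Q)"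
    by (rule eventually_ball_finite)
  then have "\<forall>\<^sub>F t in at_right 0. 0 < t \<and> (\<forall>\<sigma>\<in>Sg. iota x + t *\<^sub>R normal_vec iota \<sigma> \<tau> \<in> iota ` (\<sigma> \<inter> Q))"
    by (rule eventually_conj[OF eventually_at_right_less])
  then obtain \<epsilon> where \<epsilon>: "\<epsilon> > 0"
    "\<And>\<sigma>. \<sigma> \<in> Sg \<Longrightarrow> iota x + \<epsilon> *\<^sub>R normal_vec iota \<sigma> \<tau> \<in> iota ` (\<sigma> \<inter> Q)"
    using eventually_happens'[OF trivial_limit_at_right_real] by blast
  then have "\<forall>\<sigma>\<in>Sg. \<exists>y. y \<in> \<sigma> \<inter> Q \<and> iota y = iota x + \<epsilon> *\<^sub>R normal_vec iota \<sigma> \<tau>"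
    by (metis imageE)
  then obtain q where "\<And>\<sigma>. \<sigma> \<in> Sg \<Longrightarrow> q \<sigma> \<in> \<sigma> \<inter> Q \<and> iota (q \<sigma>) = iota x + \<epsilon> *\<^sub>R normal_vec iota \<sigma> \<tau>"
    by (auto dest!: bchoice)
  then show thesis using that \<epsilon>(1) unfolding Sg_def by blast
qed

lemma lin_part_step:
  assumes pw: "pw_affine_on iota P V f" and \<sigma>: "\<sigma> \<in> P"
    and x: "x \<in> \<sigma> \<inter> V" and q: "q \<in> \<sigma> \<inter> V" "iota q = iota x + t *\<^sub>R v"
  shows "f q = f x + t * lin_part iota V f \<sigma> v"
proof -
  have "\<sigma> \<inter> V \<noteq> {}" using x by blast
  note L = lin_partD[OF pw \<sigma> this]
  have "f q = lin_part iota V f \<sigma> (iota x + t *\<^sub>R v)" using L(2)[OF q(1)] x q(2) by auto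
  also have "\<dots> = f x + t * lin_part iota V f \<sigma> v"
    using L(2)[OF x] x linear_add[OF L(1)] linear_scale[OF L(1)] by auto
  finally show ?thesis .
qed

lemma nonneg_mult_weight:
  assumes EC: "eucl_complex iota P" and V: "open V" and pw: "pw_affine_on iota P V f"
    and mk: "minkowski iota P V k c" and c: "\<forall>\<sigma>\<in>restr iota P V k. c \<sigma> \<ge> 0"
    and lsc: "\<forall>x\<in>V. \<exists>W. open W \<and> x \<in> W \<and> strongly_concave iota H W f"
    and H: "range iota \<subseteq> H" and \<tau>: "\<tau> \<in> restr iota P V (k - 1)"
  shows "mult_weight iota P V k f c \<tau> \<ge> 0"
proof -
  define Sg where "Sg = {\<sigma> \<in> restr iota P V k. is_face iota \<tau> \<sigma>}"
  define L where "L = lin_part iota V f"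
  define n where "n \<sigma> = normal_vec iota \<sigma> \<tau>" for \<sigma>
  note T = restrD[OF \<tau>]
  obtain x where x: "x \<in> \<tau>" "x \<in> V" using T(2) by blast
  have Sg: "finite Sg"
    using finite_cells_containing[OF EC x(1)] by (auto simp: Sg_def restr_def is_face_def elim: finite_subset[rotated])
  obtain W where W: "open W" "x \<in> W" "strongly_concave iota H W f" using lsc x(2) by blast
  obtain f' :: "_ \<Rightarrow> ereal" where f': "convex {(y, z::real). y \<in> H \<and> ereal z \<le> f' y}"
    "\<And>x. x \<in> W \<Longrightarrow> ereal (f x) = f' (iota x)"
    using W(3) unfolding strongly_concave_def by blast
  define Q where "Q = W \<inter> V"
  have Q: "open Q" "\<tau> \<inter> Q \<noteq> {}" using W(1,2) V x by (auto simp: Q_def)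
  obtain xp where xp: "xp \<in> \<tau>" "xp \<in> Q" "iota xp \<in> rel_interior (iota ` \<tau>)"
    using rel_interior_point_in_open[OF EC T(1) Q] by blast
  define p where "p = iota xp"
  obtain \<epsilon> q where \<epsilon>: "\<epsilon> > 0" and q0: "\<And>\<sigma>. \<sigma> \<in> restr iota P V k \<Longrightarrow> is_face iota \<tau> \<sigma> \<Longrightarrow>
      q \<sigma> \<in> \<sigma> \<inter> Q \<and> iota (q \<sigma>) = p + \<epsilon> *\<^sub>R n \<sigma>"
    using normal_steps_into_cells[OF EC Q(1) \<tau> xp] unfolding p_def n_def by metis
  have q: "q \<sigma> \<in> \<sigma> \<inter> Q \<and> iota (q \<sigma>) = p + \<epsilon> *\<^sub>R n \<sigma>" if "\<sigma> \<in> Sg" for \<sigma>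
    using q0 that by (simp add: Sg_def)
  have fq: "f (q \<sigma>) = f xp + \<epsilon> * L \<sigma> (n \<sigma>)" if "\<sigma> \<in> Sg" for \<sigma>
    using lin_part_step[OF pw, of \<sigma> xp "q \<sigma>" \<epsilon> "n \<sigma>"] q[OF that] xp that
    by (auto simp: Sg_def L_def p_def Q_def dest: restrD(1) is_faceD(1))
  have pts: "p + \<epsilon> *\<^sub>R n \<sigma> \<in> H \<and> ereal (f xp + \<epsilon> * L \<sigma> (n \<sigma>)) \<le> f' (p + \<epsilon> *\<^sub>R n \<sigma>)"
    if "\<sigma> \<in> Sg" for \<sigma>
  proof
    show "p + \<epsilon> *\<^sub>R n \<sigma> \<in> H" using H q[OF that] by (metis range_subsetD)
    have "ereal (f (q \<sigma>)) = f' (p + \<epsilon> *\<^sub>R n \<sigma>)" using f'(2)[of "q \<sigma>"] q[OF that] by (auto simp: Q_def)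
    then show "ereal (f xp + \<epsilon> * L \<sigma> (n \<sigma>)) \<le> f' (p + \<epsilon> *\<^sub>R n \<sigma>)" using fq[OF that] by simp
  qed
  have bal: "(\<Sum>\<sigma>\<in>Sg. c \<sigma> *\<^sub>R n \<sigma>) = 0" using mk \<tau> by (simp add: minkowski_def Sg_def n_def)
  have "f' p = ereal (f xp)" using f'(2)[of xp] xp(2) by (simp add: p_def Q_def)
  then have "(\<Sum>\<sigma>\<in>Sg. c \<sigma> * L \<sigma> (n \<sigma>)) \<le> 0"
    using concave_balanced_slopes_nonpos[OF f'(1) Sg _ bal _ \<epsilon>(1) pts] c by (simp add: Sg_def)
  then show ?thesis by (simp add: mult_weight_def Sg_def L_def n_def)
qed

lemma locally_strongly_concave_imp_concave:
  assumes H: "range iota \<subseteq> H" and lsc: "locally_strongly_concave iota H U f"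
  shows "concave_pa iota P0 U f"
  unfolding concave_pa_def product_positive_def
proof (intro allI impI)
  fix V k P c P' c'
  assume "open V \<and> V \<subseteq> U \<and> complex_on iota P0 P \<and> minkowski iota P V (int k) c \<and>
    positive_weight iota P V (int k) c"
  then have V: "open V" "V \<subseteq> U" and P: "complex_on iota P0 P" and c: "positive_weight iota P V (int k) c"
    by auto
  assume "complex_on iota P0 P' \<and> pw_affine_on iota P' V f \<and> minkowski iota P' V (int k) c' \<and>
    same_cycle iota P0 V (int k) P c P' c'"
  then have P': "complex_on iota P0 P'" and pw: "pw_affine_on iota P' V f"
    and mk: "minkowski iota P' V (int k) c'" and sc: "same_cycle iota P0 V (int k) P c P' c'"
    by auto
  note EC' = complex_on_imp_eucl_complex[OF P']
  have "\<forall>x\<in>V. \<exists>W. open W \<and> x \<in> W \<and> strongly_concave iota H W f"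
    using lsc V(2) unfolding locally_strongly_concave_def by blast
  moreover have "\<forall>\<sigma>\<in>restr iota P' V (int k). c' \<sigma> \<ge> 0"
    using same_cycle_nonneg[OF complex_on_imp_eucl_complex[OF P] EC' V(1) c sc] by blast
  ultimately have "positive_weight iota P' V (int k - 1) (mult_weight iota P' V (int k) f c')"
    using nonneg_mult_weight[OF EC' V(1) pw mk _ _ H] by (simp add: positive_weight_def)
  then show "positive_cycle iota P0 V (int k - 1) P' (mult_weight iota P' V (int k) f c')"
    by (rule positive_cycle_self[OF P' minkowski_mult_weight[OF EC' V(1) pw mk]])
qed

lemma concave_imp_weakly_concave:
  assumes "open U" "balancing iota P0 U n P b" "concave_pa iota P0 U f"
  shows "weakly_concave iota P0 U n P b f"
proof -
  have "positive_weight iota P U (int n) b"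
    using assms(2) by (auto simp: balancing_def positive_weight_def less_imp_le)
  moreover have "complex_on iota P0 P" "minkowski iota P U (int n) b"
    using assms(2) by (auto simp: balancing_def)
  ultimately have "product_positive iota P0 U (int n) f P b"
    using assms(1,3) unfolding concave_pa_def by blast
  then show ?thesis by (simp add: weakly_concave_def)
qed

theorem proposition4p8:
  fixes iota :: "'a::second_countable_topology \<Rightarrow> 'n::euclidean_space"
    and H :: "'n set" and P0 :: "'a set set" and U :: "'a set" and f :: "'a \<Rightarrow> real"
  assumes "eucl_poly_space iota H P0"
    and "open U"
    and "piecewise_affine iota P0 U f"
  shows "(locally_strongly_concave iota H U f \<longrightarrow> concave_pa iota P0 U f) \<and>
         (\<forall>n P b. pure_dim iota P0 n \<and> balancing iota P0 U n P b \<and> concave_pa iota P0 U f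
            \<longrightarrow> weakly_concave iota P0 U n P b f)"
proof (intro conjI impI allI)
  have "range iota \<subseteq> H" using assms(1) by (simp add: eucl_poly_space_def)
  then show "locally_strongly_concave iota H U f \<Longrightarrow> concave_pa iota P0 U f"
    by (rule locally_strongly_concave_imp_concave)
  show "pure_dim iota P0 n \<and> balancing iota P0 U n P b \<and> concave_pa iota P0 U f
      \<Longrightarrow> weakly_concave iota P0 U n P b f" for n P b
    using concave_imp_weakly_concave[OF assms(2)] by blast
qed

end
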